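(* Let $n\ge 2$ be an integer. For $i=1,2$ let $X_{i1},\dots,X_{in}$ be a random sample from the density $\frac{1}{\sigma}e^{-(x-\mu_i)/\sigma}$, $x\ge\mu_i$, the two samples independent, $\underline{\theta}=(\mu_1,\mu_2,\sigma)\in\mathbb{R}^2\times(0,\infty)$. Let $X_i=\min_jX_{ij}$, $S=\sum_{i=1}^2\sum_{j=1}^n(X_{ij}-X_i)$, $Z_1=\min\{X_1,X_2\}$, $Z_2=\max\{X_1,X_2\}$, $W=\frac{Z_2-Z_1}{S}$, $V=\frac{S}{\sigma}$, $\mu_M=\mu_1I(X_1\ge X_2)+\mu_2I(X_1<X_2)$, $U'=\frac{Z_1-\mu_M}{\sigma}$, and $\mu=n(\max\{\mu_1,\mu_2\}-\min\{\mu_1,\mu_2\})/\sigma$. Let $f_{1,\underline{\theta}}$ denote the probability density function of $W$. Then for each fixed $w\in(0,\infty)$, the conditional density of $(U',V)$ given $W=w$ is $$f_{3,\underline{\theta}}(u,v\mid w)=\begin{cases}\dfrac{n^2}{\Gamma(2(n-1))f_{1,\underline{\theta}}(w)}v^{2n-2}e^{-v(1+nw)}e^{-2nu}e^{-\mu}, & \text{if } -\tfrac{\mu}{n}<u<0,\ -\tfrac{u}{w}<v<\infty,\ \text{or } 0<u<\tfrac{\mu}{n},\ 0<v<\infty,\\[2mm] \dfrac{n^2}{\Gamma(2(n-1))f_{1,\underline{\theta}}(w)}v^{2n-2}e^{-v(1+nw)}e^{-2nu}\left(e^{-\mu}+e^{\mu}\right), & \text{if } \tfrac{\mu}{n}<u<\infty,\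 0<v<\infty,\end{cases}$$ and $0$ otherwise.
   Context: $I(A)$ is the indicator of $A$; $\Gamma$ is the gamma function. *)

theory Defs
  imports "HOL-Probability.Probability" "HOL-Analysis.Analysis"
begin

definition shexp_density :: "real \<Rightarrow> real \<Rightarrow> real \<Rightarrow> real" where
  "shexp_density m s x = (if x \<ge> m then exp (-(x - m) / s) / s else 0)"

definition Xmin :: "(nat \<Rightarrow> nat \<Rightarrow> 'a \<Rightarrow> real) \<Rightarrow> nat \<Rightarrow> nat \<Rightarrow> 'a \<Rightarrow> real" where
  "Xmin X n i \<omega> = Min ((\<lambda>j. X i j \<omega>) ` {1..n})"

definition Sstat :: "(nat \<Rightarrow> nat \<Rightarrow> 'a \<Rightarrow> real) \<Rightarrow> nat \<Rightarrow> 'a \<Rightarrow> real" where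
  "Sstat X n \<omega> = (\<Sum>i\<in>{1,2}. \<Sum>j=1..n. (X i j \<omega> - Xmin X n i \<omega>))"

definition Z1 :: "(nat \<Rightarrow> nat \<Rightarrow> 'a \<Rightarrow> real) \<Rightarrow> nat \<Rightarrow> 'a \<Rightarrow> real" where
  "Z1 X n \<omega> = min (Xmin X n 1 \<omega>) (Xmin X n 2 \<omega>)"

definition Z2 :: "(nat \<Rightarrow> nat \<Rightarrow> 'a \<Rightarrow> real) \<Rightarrow> nat \<Rightarrow> 'a \<Rightarrow> real" where
  "Z2 X n \<omega> = max (Xmin X n 1 \<omega>) (Xmin X n 2 \<omega>)"

definition Wstat :: "(nat \<Rightarrow> nat \<Rightarrow> 'a \<Rightarrow> real) \<Rightarrow> nat \<Rightarrow> 'a \<Rightarrow> real" where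
  "Wstat X n \<omega> = (Z2 X n \<omega> - Z1 X n \<omega>) / Sstat X n \<omega>"

definition Vstat :: "(nat \<Rightarrow> nat \<Rightarrow> 'a \<Rightarrow> real) \<Rightarrow> nat \<Rightarrow> real \<Rightarrow> 'a \<Rightarrow> real" where
  "Vstat X n \<sigma> \<omega> = Sstat X n \<omega> / \<sigma>"

definition muM :: "(nat \<Rightarrow> nat \<Rightarrow> 'a \<Rightarrow> real) \<Rightarrow> nat \<Rightarrow> real \<Rightarrow> real \<Rightarrow> 'a \<Rightarrow> real" where
  "muM X n \<mu>1 \<mu>2 \<omega> =
     \<mu>1 * (if Xmin X n 1 \<omega> \<ge> Xmin X n 2 \<omega> then 1 else 0)
   + \<mu>2 * (if Xmin X n 1 \<omega> < Xmin X n 2 \<omega> then 1 else 0)"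

definition Uprime :: "(nat \<Rightarrow> nat \<Rightarrow> 'a \<Rightarrow> real) \<Rightarrow> nat \<Rightarrow> real \<Rightarrow> real \<Rightarrow> real \<Rightarrow> 'a \<Rightarrow> real" where
  "Uprime X n \<mu>1 \<mu>2 \<sigma> \<omega> = (Z1 X n \<omega> - muM X n \<mu>1 \<mu>2 \<omega>) / \<sigma>"

definition mu_par :: "nat \<Rightarrow> real \<Rightarrow> real \<Rightarrow> real \<Rightarrow> real" where
  "mu_par n \<mu>1 \<mu>2 \<sigma> = real n * (max \<mu>1 \<mu>2 - min \<mu>1 \<mu>2) / \<sigma>"

text \<open>The claimed conditional density f_3(u,v | w) of (U',V) given W = w,
  where f1w is the value f_1(w) of the density of W; 0 outside w > 0.\<close>
definition cond_dens3 :: "nat \<Rightarrow> real \<Rightarrow> real \<Rightarrow> real \<Rightarrow> real \<Rightarrow> real \<Rightarrow> real" where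
  "cond_dens3 n \<mu> f1w u v w =
    (let c = real n ^ 2 / (Gamma (2 * (real n - 1)) * f1w)
             * v ^ (2*n - 2) * exp (- v * (1 + real n * w)) * exp (- 2 * real n * u)
     in if w > 0 \<and> ((- \<mu> / real n < u \<and> u < 0 \<and> - u / w < v) \<or> (0 < u \<and> u < \<mu> / real n \<and> 0 < v))
        then c * exp (- \<mu>)
        else if w > 0 \<and> \<mu> / real n < u \<and> 0 < v
        then c * (exp (- \<mu>) + exp \<mu>)
        else 0)"

end

theory Submission
  imports Defs
begin

text \<open>For a sample of size \<open>k\<close> from the shifted exponential law with scale \<open>\<sigma>\<close>, the minimum and
  the spread \<open>\<Sum>j (x\<^sub>j - min x)\<close> are independent, the minimum being shifted exponential with scale
  \<open>\<sigma> / k\<close> and the spread \<open>\<Gamma>(k - 1, \<sigma>)\<close>-distributed; this follows by induction on \<open>k\<close>, splitting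
  according to whether a new observation falls above or below the current minimum. Hence
  \<open>(X\<^sub>1, X\<^sub>2, S)\<close> has an explicit product density. Splitting according to which sample has the
  smaller minimum and changing variables to \<open>(U', V, W)\<close> turns it into a sum of two branch
  densities which, off a null set, is \<open>f\<^sub>3(u, v | w) f\<^sub>1(w)\<close> with the factor \<open>f\<^sub>1(w)\<close> cancelled.
  The conditional form follows because the joint density vanishes almost everywhere where
  \<open>f\<^sub>1(w) = 0\<close>.\<close>

lemma pred_real_atLeast [measurable (raw)]:
  "f \<in> borel_measurable M \<Longrightarrow> g \<in> borel_measurable M \<Longrightarrow> Measurable.pred M (\<lambda>x. (f x :: real) \<in> {g x..})"
  by (simp add: atLeast_iff) measurable

lemma pred_real_lessThan [measurable (raw)]:
  "f \<in> borel_measurable M \<Longrightarrow> g \<in> borel_measurable M \<Longrightarrow> Measurable.pred M (\<lambda>x. (f x :: real) \<in> {..<g x})"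
  by (simp add: lessThan_iff) measurable

lemma nn_integral_lborel_affine2:
  assumes "\<sigma> > 0" and [measurable]: "case_prod f \<in> borel_measurable (borel \<Otimes>\<^sub>M borel)"
  shows "(\<integral>\<^sup>+a. \<integral>\<^sup>+t. f a t \<partial>lborel \<partial>lborel) = (\<integral>\<^sup>+u. \<integral>\<^sup>+v. ennreal (\<sigma> * \<sigma>) * f (\<mu> + \<sigma> * u) (\<sigma> * v) \<partial>lborel \<partial>lborel)"
proof -
  have "(\<integral>\<^sup>+a. \<integral>\<^sup>+t. f a t \<partial>lborel \<partial>lborel) = (\<integral>\<^sup>+a. ennreal \<sigma> * (\<integral>\<^sup>+v. f a (\<sigma> * v) \<partial>lborel) \<partial>lborel)"
    using assms(1) nn_integral_real_affine[of "f a" \<sigma> 0 for a] by (intro nn_integral_cong) simp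
  also have "\<dots> = ennreal \<sigma> * (\<integral>\<^sup>+u. ennreal \<sigma> * (\<integral>\<^sup>+v. f (\<mu> + \<sigma> * u) (\<sigma> * v) \<partial>lborel) \<partial>lborel)"
    using assms(1) nn_integral_real_affine[of "\<lambda>a. ennreal \<sigma> * (\<integral>\<^sup>+v. f a (\<sigma> * v) \<partial>lborel)" \<sigma> \<mu>] by simp
  also have "\<dots> = (\<integral>\<^sup>+u. \<integral>\<^sup>+v. ennreal (\<sigma> * \<sigma>) * f (\<mu> + \<sigma> * u) (\<sigma> * v) \<partial>lborel \<partial>lborel)"
    using assms(1) by (simp add: nn_integral_cmult ennreal_mult mult.assoc)
  finally show ?thesis .
qed

lemma nn_integral_lborel3_add:
  assumes [measurable]: "(\<lambda>p. f (fst p) (fst (snd p)) (snd (snd p))) \<in> borel_measurable (borel \<Otimes>\<^sub>M borel \<Otimes>\<^sub>M borel)"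
    "(\<lambda>p. g (fst p) (fst (snd p)) (snd (snd p))) \<in> borel_measurable (borel \<Otimes>\<^sub>M borel \<Otimes>\<^sub>M borel)"
  shows "(\<integral>\<^sup>+x. \<integral>\<^sup>+y. \<integral>\<^sup>+z. f x y z + g x y z \<partial>lborel \<partial>lborel \<partial>lborel)
       = (\<integral>\<^sup>+x. \<integral>\<^sup>+y. \<integral>\<^sup>+z. f x y z \<partial>lborel \<partial>lborel \<partial>lborel) + (\<integral>\<^sup>+x. \<integral>\<^sup>+y. \<integral>\<^sup>+z. g x y z \<partial>lborel \<partial>lborel \<partial>lborel)"
proof -
  have sections [measurable]: "(\<lambda>p. f x (fst p) (snd p)) \<in> borel_measurable (borel \<Otimes>\<^sub>M borel)"
    "(\<lambda>p. g x (fst p) (snd p)) \<in> borel_measurable (borel \<Otimes>\<^sub>M borel)" for x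
    using measurable_compose[OF measurable_Pair1'[of x] assms(1)] measurable_compose[OF measurable_Pair1'[of x] assms(2)]
    by simp_all
  have [measurable]: "f x y \<in> borel_measurable borel" "g x y \<in> borel_measurable borel" for x y
    using measurable_compose[OF measurable_Pair1'[of y] sections(1)] measurable_compose[OF measurable_Pair1'[of y] sections(2)]
    by simp_all
  have [measurable]: "(\<lambda>p. f (fst (fst p)) (snd (fst p)) (snd p)) \<in> borel_measurable ((borel \<Otimes>\<^sub>M borel) \<Otimes>\<^sub>M borel)"
    "(\<lambda>p. g (fst (fst p)) (snd (fst p)) (snd p)) \<in> borel_measurable ((borel \<Otimes>\<^sub>M borel) \<Otimes>\<^sub>M borel)"
  proof -
    have "(\<lambda>p. (fst (fst p), snd (fst p), snd p)) \<in> measurable ((borel \<Otimes>\<^sub>M borel) \<Otimes>\<^sub>M borel) (borel \<Otimes>\<^sub>M borel \<Otimes>\<^sub>M borel)"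
      by measurable
    from measurable_compose[OF this assms(1)] measurable_compose[OF this assms(2)]
    show "(\<lambda>p. f (fst (fst p)) (snd (fst p)) (snd p)) \<in> borel_measurable ((borel \<Otimes>\<^sub>M borel) \<Otimes>\<^sub>M borel)"
      "(\<lambda>p. g (fst (fst p)) (snd (fst p)) (snd p)) \<in> borel_measurable ((borel \<Otimes>\<^sub>M borel) \<Otimes>\<^sub>M borel)"
      by simp_all
  qed
  have "(\<integral>\<^sup>+x. \<integral>\<^sup>+y. \<integral>\<^sup>+z. f x y z + g x y z \<partial>lborel \<partial>lborel \<partial>lborel)
      = (\<integral>\<^sup>+x. \<integral>\<^sup>+y. (\<integral>\<^sup>+z. f x y z \<partial>lborel) + (\<integral>\<^sup>+z. g x y z \<partial>lborel) \<partial>lborel \<partial>lborel)"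
    by (intro nn_integral_cong nn_integral_add) measurable
  also have "\<dots> = (\<integral>\<^sup>+x. (\<integral>\<^sup>+y. \<integral>\<^sup>+z. f x y z \<partial>lborel \<partial>lborel) + (\<integral>\<^sup>+y. \<integral>\<^sup>+z. g x y z \<partial>lborel \<partial>lborel) \<partial>lborel)"
    by (intro nn_integral_cong nn_integral_add) measurable
  also have "\<dots> = (\<integral>\<^sup>+x. \<integral>\<^sup>+y. \<integral>\<^sup>+z. f x y z \<partial>lborel \<partial>lborel \<partial>lborel) + (\<integral>\<^sup>+x. \<integral>\<^sup>+y. \<integral>\<^sup>+z. g x y z \<partial>lborel \<partial>lborel \<partial>lborel)"
    by (rule nn_integral_add) measurable
  finally show ?thesis .
qed

lemma nn_integral_lborel3_cong_AE:
  "AE x in lborel. AE y in lborel. AE z in lborel. f x y z = g x y z \<Longrightarrow>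
   (\<integral>\<^sup>+x. \<integral>\<^sup>+y. \<integral>\<^sup>+z. f x y z \<partial>lborel \<partial>lborel \<partial>lborel) = (\<integral>\<^sup>+x. \<integral>\<^sup>+y. \<integral>\<^sup>+z. g x y z \<partial>lborel \<partial>lborel \<partial>lborel)"
  by (auto intro!: nn_integral_cong_AE elim!: eventually_mono)

lemma nn_integral_lborel3:
  fixes H :: "real \<times> real \<times> real \<Rightarrow> ennreal"
  assumes [measurable]: "H \<in> borel_measurable (borel \<Otimes>\<^sub>M borel \<Otimes>\<^sub>M borel)"
  shows "(\<integral>\<^sup>+u. \<integral>\<^sup>+v. \<integral>\<^sup>+w. H (u, v, w) \<partial>lborel \<partial>lborel \<partial>lborel) = (\<integral>\<^sup>+z. H z \<partial>(lborel \<Otimes>\<^sub>M lborel \<Otimes>\<^sub>M lborel))"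
proof -
  have sf: "sigma_finite_measure (lborel \<Otimes>\<^sub>M (lborel :: real measure))"
    by (intro sigma_finite_pair_measure lborel.sigma_finite_measure_axioms)
  have "(\<integral>\<^sup>+u. \<integral>\<^sup>+v. \<integral>\<^sup>+w. H (u, v, w) \<partial>lborel \<partial>lborel \<partial>lborel) = (\<integral>\<^sup>+u. \<integral>\<^sup>+p. H (u, p) \<partial>(lborel \<Otimes>\<^sub>M lborel) \<partial>lborel)"
    by (intro nn_integral_cong lborel.nn_integral_fst) measurable
  also have "\<dots> = (\<integral>\<^sup>+z. H z \<partial>(lborel \<Otimes>\<^sub>M lborel \<Otimes>\<^sub>M lborel))"
    by (rule sigma_finite_measure.nn_integral_fst[OF sf]) measurable
  finally show ?thesis .
qed

lemma distributedI_nn_integral: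
  assumes "Y \<in> measurable M N" "p \<in> borel_measurable N"
    and "\<And>A. A \<in> sets N \<Longrightarrow> (\<integral>\<^sup>+\<omega>. indicator A (Y \<omega>) \<partial>M) = (\<integral>\<^sup>+z. p z * indicator A z \<partial>N)"
  shows "distributed M N Y p"
proof -
  have "distr M N Y = density N p"
  proof (rule measure_eqI)
    fix A assume "A \<in> sets (distr M N Y)"
    then have A: "A \<in> sets N" by simp
    have "emeasure (distr M N Y) A = (\<integral>\<^sup>+z. indicator A z \<partial>distr M N Y)"
      using A by simp
    also have "\<dots> = (\<integral>\<^sup>+\<omega>. indicator A (Y \<omega>) \<partial>M)"
      using assms(1) A by (intro nn_integral_distr) auto
    also have "\<dots> = emeasure (density N p) A"
      using assms(2) A by (simp add: assms(3) emeasure_density)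
    finally show "emeasure (distr M N Y) A = emeasure (density N p) A" .
  qed simp
  then show ?thesis
    unfolding distributed_def using assms(1,2) by simp
qed

lemma AE_density_zero_where_marginal_zero:
  assumes Z: "distributed M N Z p" and marginal: "distributed M K (\<lambda>\<omega>. \<pi> (Z \<omega>)) f"
    and [measurable]: "\<pi> \<in> measurable N K"
  shows "AE z in N. f (\<pi> z) = 0 \<longrightarrow> p z = 0"
proof -
  note [measurable] = distributed_borel_measurable[OF Z] distributed_borel_measurable[OF marginal]
  let ?B = "{x \<in> space K. f x = 0}"
  have [measurable]: "?B \<in> sets K" by measurable
  have "(\<integral>\<^sup>+z. p z * indicator ?B (\<pi> z) \<partial>N) = (\<integral>\<^sup>+\<omega>. indicator ?B (\<pi> (Z \<omega>)) \<partial>M)"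
    by (rule distributed_nn_integral[OF Z]) measurable
  also have "\<dots> = (\<integral>\<^sup>+x. f x * indicator ?B x \<partial>K)"
    by (rule distributed_nn_integral[OF marginal, symmetric]) measurable
  also have "\<dots> = 0"
    by (rule nn_integral_zero') (auto simp: indicator_def)
  finally have "AE z in N. p z * indicator ?B (\<pi> z) = 0"
    by (subst nn_integral_0_iff_AE[symmetric]) measurable
  then show ?thesis
    using AE_space by eventually_elim (auto simp: indicator_def measurable_space[OF assms(3)])
qed

lemma distributed_density_cong_marginal:
  assumes Z: "distributed M N Z p" and marginal: "distributed M K (\<lambda>\<omega>. \<pi> (Z \<omega>)) f"
    and "\<pi> \<in> measurable N K" "q \<in> borel_measurable N"
    and "\<And>z. z \<in> space N \<Longrightarrow> f (\<pi> z) \<noteq> 0 \<Longrightarrow> q z = p z"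
    and "\<And>z. z \<in> space N \<Longrightarrow> f (\<pi> z) = 0 \<Longrightarrow> q z = 0"
  shows "distributed M N Z q"
proof -
  have "AE z in N. p z = q z"
    using AE_density_zero_where_marginal_zero[OF Z marginal assms(3)] AE_space
    by eventually_elim (metis assms(5,6))
  then show ?thesis
    using Z distributed_cong_density[OF _ assms(4) distributed_borel_measurable[OF Z]] by blast
qed

section \<open>The law of the spread\<close>

lemma erlang_density_nonpos: "k > 0 \<Longrightarrow> x \<le> 0 \<Longrightarrow> erlang_density k l x = 0"
  by (cases "x = 0") (auto simp: erlang_density_def)

lemma nn_integral_erlang_convolution:
  assumes "\<sigma> > 0" and [measurable]: "\<phi> \<in> borel_measurable borel"
  shows "(\<integral>\<^sup>+t. ennreal (erlang_density k (1 / \<sigma>) t) *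
            (\<integral>\<^sup>+r. ennreal (erlang_density l (1 / \<sigma>) r) * \<phi> (t + r) \<partial>lborel) \<partial>lborel)
       = (\<integral>\<^sup>+s. ennreal (erlang_density (Suc k + Suc l - 1) (1 / \<sigma>) s) * \<phi> s \<partial>lborel)"
proof -
  let ?e = "\<lambda>k t. ennreal (erlang_density k (1 / \<sigma>) t)"
  have "(\<integral>\<^sup>+t. ?e k t * (\<integral>\<^sup>+r. ?e l r * \<phi> (t + r) \<partial>lborel) \<partial>lborel)
      = (\<integral>\<^sup>+t. \<integral>\<^sup>+s. ?e k t * (?e l (s - t) * \<phi> s) \<partial>lborel \<partial>lborel)"
  proof (rule nn_integral_cong)
    fix t :: real
    have "(\<integral>\<^sup>+s. ?e l (s - t) * \<phi> s \<partial>lborel) = (\<integral>\<^sup>+r. ?e l (t + r - t) * \<phi> (t + r) \<partial>lborel)"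
      using nn_integral_real_affine[of "\<lambda>s. ?e l (s - t) * \<phi> s" 1 t] by simp
    then show "?e k t * (\<integral>\<^sup>+r. ?e l r * \<phi> (t + r) \<partial>lborel) = (\<integral>\<^sup>+s. ?e k t * (?e l (s - t) * \<phi> s) \<partial>lborel)"
      by (simp add: nn_integral_cmult)
  qed
  also have "\<dots> = (\<integral>\<^sup>+s. \<integral>\<^sup>+t. ?e k t * (?e l (s - t) * \<phi> s) \<partial>lborel \<partial>lborel)"
    by (rule lborel_pair.Fubini'[symmetric]) measurable
  also have "\<dots> = (\<integral>\<^sup>+s. ?e (Suc k + Suc l - 1) s * \<phi> s \<partial>lborel)"
  proof (rule nn_integral_cong)
    fix s :: real
    have "(\<integral>\<^sup>+t. ?e k t * (?e l (s - t) * \<phi> s) \<partial>lborel) = (\<integral>\<^sup>+t. ?e l (s - t) * ?e k t \<partial>lborel) * \<phi> s"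
      by (subst nn_integral_multc[symmetric]) (auto intro!: nn_integral_cong simp: mult_ac)
    also have "\<dots> = ?e (Suc l + Suc k - 1) s * \<phi> s"
      using convolution_erlang_density[of "1 / \<sigma>" l k] assms(1) by (simp add: fun_eq_iff)
    finally show "(\<integral>\<^sup>+t. ?e k t * (?e l (s - t) * \<phi> s) \<partial>lborel) = ?e (Suc k + Suc l - 1) s * \<phi> s"
      by (simp add: add.commute)
  qed
  finally show ?thesis .
qed

text \<open>The law of the spread of a sample of size \<open>k\<close> from an exponential law with scale \<open>\<sigma>\<close>:
  \<open>\<Gamma>(k - 1, \<sigma>)\<close>, which is \<^const>\<open>erlang_density\<close> with index \<open>k - 2\<close>, and the point mass at \<open>0\<close>
  for \<open>k = 1\<close>.\<close>

definition spread_law :: "nat \<Rightarrow> real \<Rightarrow> real measure" where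
  "spread_law k \<sigma> = (if k = 1 then return lborel 0
     else density lborel (\<lambda>t. ennreal (erlang_density (k - 2) (1 / \<sigma>) t)))"

lemma sets_spread_law [measurable_cong, simp]: "sets (spread_law k \<sigma>) = sets borel"
  by (simp add: spread_law_def)

lemma nn_integral_spread_law_1:
  "f \<in> borel_measurable borel \<Longrightarrow> (\<integral>\<^sup>+t. f t \<partial>spread_law 1 \<sigma>) = f 0"
  by (simp add: spread_law_def nn_integral_return)

lemma nn_integral_spread_law:
  "k \<ge> 2 \<Longrightarrow> f \<in> borel_measurable borel \<Longrightarrow>
   (\<integral>\<^sup>+t. f t \<partial>spread_law k \<sigma>) = (\<integral>\<^sup>+t. ennreal (erlang_density (k - 2) (1 / \<sigma>) t) * f t \<partial>lborel)"
  by (simp add: spread_law_def nn_integral_density)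

lemma sigma_finite_spread_law: "sigma_finite_measure (spread_law k \<sigma>)"
proof (cases "k = 1")
  case True
  then show ?thesis
    by (simp add: spread_law_def prob_space_return prob_space_imp_sigma_finite)
next
  case False
  then show ?thesis
    unfolding spread_law_def
    by (simp add: sigma_finite_measure.sigma_finite_iff_density_finite[OF lborel.sigma_finite_measure_axioms])
qed

interpretation spread_law: sigma_finite_measure "spread_law k \<sigma>" for k \<sigma>
  by (rule sigma_finite_spread_law)

lemma nn_integral_spread_law_lborel_swap:
  assumes [measurable]: "case_prod f \<in> borel_measurable (borel \<Otimes>\<^sub>M borel)"
  shows "(\<integral>\<^sup>+t. \<integral>\<^sup>+y. f y t \<partial>lborel \<partial>spread_law k \<sigma>) = (\<integral>\<^sup>+y. \<integral>\<^sup>+t. f y t \<partial>spread_law k \<sigma> \<partial>lborel)"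
proof -
  interpret pair_sigma_finite lborel "spread_law k \<sigma>" ..
  show ?thesis by (rule Fubini') measurable
qed

lemma nn_integral_spread_law_Suc:
  assumes "k \<ge> 1" and "\<sigma> > 0" and [measurable]: "\<phi> \<in> borel_measurable borel"
  shows "(\<integral>\<^sup>+t. \<integral>\<^sup>+r. ennreal (exponential_density (1 / \<sigma>) r) * \<phi> (t + r) \<partial>lborel \<partial>spread_law k \<sigma>)
       = (\<integral>\<^sup>+s. \<phi> s \<partial>spread_law (Suc k) \<sigma>)"
proof (cases "k = 1")
  case True
  have "(\<integral>\<^sup>+t. \<integral>\<^sup>+r. ennreal (exponential_density (1 / \<sigma>) r) * \<phi> (t + r) \<partial>lborel \<partial>spread_law 1 \<sigma>)
      = (\<integral>\<^sup>+r. ennreal (exponential_density (1 / \<sigma>) r) * \<phi> (0 + r) \<partial>lborel)"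
    by (rule nn_integral_spread_law_1) measurable
  then show ?thesis
    using True by (simp add: nn_integral_spread_law)
next
  case False
  then have "k \<ge> 2" "Suc (k - 2) = Suc k - 2" using assms(1) by simp_all
  then show ?thesis
    using nn_integral_erlang_convolution[OF assms(2,3), of "k - 2" 0]
    by (simp add: nn_integral_spread_law mult.commute)
qed

lemma nn_integral_spread_law_add:
  assumes "k \<ge> 2" "l \<ge> 2" "\<sigma> > 0" and [measurable]: "\<phi> \<in> borel_measurable borel"
  shows "(\<integral>\<^sup>+t. \<integral>\<^sup>+r. \<phi> (t + r) \<partial>spread_law l \<sigma> \<partial>spread_law k \<sigma>)
       = (\<integral>\<^sup>+s. ennreal (erlang_density (k + l - 3) (1 / \<sigma>) s) * \<phi> s \<partial>lborel)"
proof -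
  have "Suc (k - 2) + Suc (l - 2) - 1 = k + l - 3" using assms by simp
  then show ?thesis
    using nn_integral_erlang_convolution[OF assms(3,4), of "k - 2" "l - 2"] assms
    by (simp add: nn_integral_spread_law)
qed

section \<open>Minimum and spread of a shifted exponential sample\<close>

lemma borel_measurable_shexp_density [measurable]: "shexp_density a \<sigma> \<in> borel_measurable borel"
  unfolding shexp_density_def by measurable

lemma shexp_density_nonneg: "\<sigma> > 0 \<Longrightarrow> shexp_density a \<sigma> x \<ge> 0"
  by (simp add: shexp_density_def)

lemma shexp_density_scaled:
  "\<sigma> > 0 \<Longrightarrow> k > 0 \<Longrightarrow> shexp_density a (\<sigma> / real k) x =
     (if a \<le> x then real k / \<sigma> * exp (- real k * (x - a) / \<sigma>) else 0)"
  by (simp add: shexp_density_def field_simps)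

lemma shexp_density_mult_exp:
  assumes "\<sigma> > 0" "k > 0"
  shows "shexp_density a (\<sigma> / real k) x * exp (- real l * (x - a) / \<sigma>)
       = real k / real (k + l) * shexp_density a (\<sigma> / real (k + l)) x"
proof -
  have "exp (- real k * (x - a) / \<sigma>) * exp (- real l * (x - a) / \<sigma>) = exp (- real (k + l) * (x - a) / \<sigma>)"
    unfolding exp_add[symmetric] by (simp add: add_divide_distrib[symmetric] algebra_simps)
  moreover have "k + l > 0" using assms by simp
  ultimately show ?thesis
    using assms unfolding shexp_density_scaled[OF assms] shexp_density_scaled[OF assms(1) \<open>k + l > 0\<close>]
    by (simp add: field_simps)
qed

lemma shexp_density_memoryless:
  assumes "\<sigma> > 0" "a \<le> m"
  shows "shexp_density a \<sigma> (m + r) * indicator {m..} (m + r) = exp (- (m - a) / \<sigma>) * exponential_density (1 / \<sigma>) r"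
  using assms
  by (auto simp: shexp_density_def exponential_density_def field_simps indicator_def simp flip: exp_add)

lemma shexp_density_scaled_shift:
  assumes "\<sigma> > 0" "k > 0" "a \<le> y" "r \<noteq> 0"
  shows "indicator {y<..} (y + r / real k) * shexp_density a (\<sigma> / real k) (y + r / real k)
       = real k * exp (- real k * (y - a) / \<sigma>) * exponential_density (1 / \<sigma>) r"
proof (cases "r < 0")
  case True
  then have "\<not> y < y + r / real k" using assms(2) by (simp add: zero_less_divide_iff)
  then show ?thesis using True by (simp add: exponential_density_def)
next
  case False
  then have "r > 0" using assms(4) by simp
  then have "y < y + r / real k" "a \<le> y + r / real k"
    using assms(2,3) by (simp_all add: add_increasing2)
  moreover have "exp (- real k * (y + r / real k - a) / \<sigma>) = exp (- real k * (y - a) / \<sigma>) * exp (- r * (1 / \<sigma>))"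
    unfolding exp_add[symmetric] using assms(1,2) by (simp add: field_simps)
  ultimately show ?thesis
    using False assms(1,2) by (simp add: shexp_density_scaled exponential_density_def)
qed

lemma nn_integral_shexp_above:
  assumes "\<sigma> > 0" "a \<le> m" and [measurable]: "f \<in> borel_measurable borel"
  shows "(\<integral>\<^sup>+y. ennreal (shexp_density a \<sigma> y) * indicator {m..} y * f (y - m) \<partial>lborel)
       = ennreal (exp (- (m - a) / \<sigma>)) * (\<integral>\<^sup>+r. ennreal (exponential_density (1 / \<sigma>) r) * f r \<partial>lborel)"
proof -
  have "(\<integral>\<^sup>+y. ennreal (shexp_density a \<sigma> y) * indicator {m..} y * f (y - m) \<partial>lborel)
      = (\<integral>\<^sup>+r. ennreal (shexp_density a \<sigma> (m + r)) * indicator {m..} (m + r) * f r \<partial>lborel)"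
    using nn_integral_real_affine[of "\<lambda>y. ennreal (shexp_density a \<sigma> y) * indicator {m..} y * f (y - m)" 1 m]
    by simp
  also have "\<dots> = (\<integral>\<^sup>+r. ennreal (exp (- (m - a) / \<sigma>)) * (ennreal (exponential_density (1 / \<sigma>) r) * f r) \<partial>lborel)"
  proof (rule nn_integral_cong)
    fix r :: real
    have "ennreal (shexp_density a \<sigma> (m + r)) * indicator {m..} (m + r)
        = ennreal (shexp_density a \<sigma> (m + r) * indicator {m..} (m + r))"
      by (simp add: indicator_def)
    also have "\<dots> = ennreal (exp (- (m - a) / \<sigma>)) * ennreal (exponential_density (1 / \<sigma>) r)"
      using assms(1) by (simp add: shexp_density_memoryless[OF assms(1,2)] ennreal_mult)
    finally show "ennreal (shexp_density a \<sigma> (m + r)) * indicator {m..} (m + r) * f r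
        = ennreal (exp (- (m - a) / \<sigma>)) * (ennreal (exponential_density (1 / \<sigma>) r) * f r)"
      by (simp add: mult.assoc)
  qed
  also have "\<dots> = ennreal (exp (- (m - a) / \<sigma>)) * (\<integral>\<^sup>+r. ennreal (exponential_density (1 / \<sigma>) r) * f r \<partial>lborel)"
    by (rule nn_integral_cmult) measurable
  finally show ?thesis .
qed

lemma nn_integral_spread_observation_above_min:
  assumes "k \<ge> 1" "\<sigma> > 0" and [measurable]: "f \<in> borel_measurable borel"
  shows "ennreal (shexp_density a (\<sigma> / real k) m) *
           (\<integral>\<^sup>+t. \<integral>\<^sup>+y. ennreal (shexp_density a \<sigma> y) * indicator {m..} y * f (t + (y - m)) \<partial>lborel \<partial>spread_law k \<sigma>)
       = ennreal (real k / real (Suc k)) *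
           (ennreal (shexp_density a (\<sigma> / real (Suc k)) m) * (\<integral>\<^sup>+s. f s \<partial>spread_law (Suc k) \<sigma>))"
proof (cases "a \<le> m")
  case False
  then show ?thesis by (simp add: shexp_density_def)
next
  case True
  have "(\<integral>\<^sup>+t. \<integral>\<^sup>+y. ennreal (shexp_density a \<sigma> y) * indicator {m..} y * f (t + (y - m)) \<partial>lborel \<partial>spread_law k \<sigma>)
      = (\<integral>\<^sup>+t. ennreal (exp (- (m - a) / \<sigma>)) *
           (\<integral>\<^sup>+r. ennreal (exponential_density (1 / \<sigma>) r) * f (t + r) \<partial>lborel) \<partial>spread_law k \<sigma>)"
    using assms(2) True by (intro nn_integral_cong nn_integral_shexp_above) measurable
  also have "\<dots> = ennreal (exp (- (m - a) / \<sigma>)) * (\<integral>\<^sup>+s. f s \<partial>spread_law (Suc k) \<sigma>)"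
    by (subst nn_integral_cmult) (measurable, simp add: nn_integral_spread_law_Suc[OF assms])
  moreover have "shexp_density a (\<sigma> / real k) m * exp (- (m - a) / \<sigma>)
      = real k / real (Suc k) * shexp_density a (\<sigma> / real (Suc k)) m"
    using shexp_density_mult_exp[OF assms(2), of k a m 1] assms(1) by simp
  then have "ennreal (shexp_density a (\<sigma> / real k) m) * ennreal (exp (- (m - a) / \<sigma>))
      = ennreal (real k / real (Suc k)) * ennreal (shexp_density a (\<sigma> / real (Suc k)) m)"
    using assms by (simp add: shexp_density_nonneg flip: ennreal_mult)
  ultimately show ?thesis
    by (metis mult.assoc)
qed

lemma nn_integral_spread_observation_below_min_at:
  assumes "k \<ge> 1" "\<sigma> > 0" and [measurable]: "f \<in> borel_measurable borel"
  shows "ennreal (shexp_density a \<sigma> y) *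
           (\<integral>\<^sup>+m. ennreal (indicator {y<..} m * shexp_density a (\<sigma> / real k) m) *
              (\<integral>\<^sup>+t. f (t + real k * (m - y)) \<partial>spread_law k \<sigma>) \<partial>lborel)
       = ennreal (1 / real (Suc k)) *
           (ennreal (shexp_density a (\<sigma> / real (Suc k)) y) * (\<integral>\<^sup>+s. f s \<partial>spread_law (Suc k) \<sigma>))"
proof (cases "a \<le> y")
  case False
  then show ?thesis by (simp add: shexp_density_def)
next
  case True
  let ?F = "\<lambda>m. ennreal (indicator {y<..} m * shexp_density a (\<sigma> / real k) m) *
              (\<integral>\<^sup>+t. f (t + real k * (m - y)) \<partial>spread_law k \<sigma>)"
  let ?c = "real k * exp (- real k * (y - a) / \<sigma>)"
  have k: "real k > 0" using assms(1) by simp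
  have "(\<integral>\<^sup>+m. ?F m \<partial>lborel) = ennreal (1 / real k) * (\<integral>\<^sup>+r. ?F (y + 1 / real k * r) \<partial>lborel)"
    using k nn_integral_real_affine[of ?F "1 / real k" y] by (simp add: measurable_ident)
  also have "(\<integral>\<^sup>+r. ?F (y + 1 / real k * r) \<partial>lborel)
     = (\<integral>\<^sup>+r. ennreal ?c * (ennreal (exponential_density (1 / \<sigma>) r) * (\<integral>\<^sup>+t. f (t + r) \<partial>spread_law k \<sigma>)) \<partial>lborel)"
  proof (rule nn_integral_cong_AE)
    show "AE r in lborel. ?F (y + 1 / real k * r)
        = ennreal ?c * (ennreal (exponential_density (1 / \<sigma>) r) * (\<integral>\<^sup>+t. f (t + r) \<partial>spread_law k \<sigma>))"
      using AE_lborel_singleton[of 0]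
    proof eventually_elim
      case (elim r)
      have "real k * (y + 1 / real k * r - y) = r" using k by (simp add: field_simps)
      then show ?case
        using shexp_density_scaled_shift[OF assms(2) _ True elim, of k] assms(1,2) k
        by (simp add: ennreal_mult mult.assoc)
    qed
  qed
  also have "\<dots> = ennreal ?c * (\<integral>\<^sup>+t. \<integral>\<^sup>+r. ennreal (exponential_density (1 / \<sigma>) r) * f (t + r) \<partial>lborel \<partial>spread_law k \<sigma>)"
    by (simp add: nn_integral_cmult nn_integral_spread_law_lborel_swap)
  also have "\<dots> = ennreal ?c * (\<integral>\<^sup>+s. f s \<partial>spread_law (Suc k) \<sigma>)"
    by (simp add: nn_integral_spread_law_Suc[OF assms])
  finally have "(\<integral>\<^sup>+m. ?F m \<partial>lborel) = ennreal (exp (- real k * (y - a) / \<sigma>)) * (\<integral>\<^sup>+s. f s \<partial>spread_law (Suc k) \<sigma>)"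
    using k by (simp add: ennreal_mult[symmetric] mult.assoc[symmetric])
  moreover have "shexp_density a \<sigma> y * exp (- real k * (y - a) / \<sigma>)
      = 1 / real (Suc k) * shexp_density a (\<sigma> / real (Suc k)) y"
    using shexp_density_mult_exp[OF assms(2), of 1 a y k] by simp
  then have "ennreal (shexp_density a \<sigma> y) * ennreal (exp (- real k * (y - a) / \<sigma>))
      = ennreal (1 / real (Suc k)) * ennreal (shexp_density a (\<sigma> / real (Suc k)) y)"
    using assms by (simp add: shexp_density_nonneg flip: ennreal_mult)
  ultimately show ?thesis
    by (simp only: mult.assoc[symmetric])
qed

lemma nn_integral_spread_observation_below_min:
  assumes "k \<ge> 1" "\<sigma> > 0" and [measurable]: "g \<in> borel_measurable (borel \<Otimes>\<^sub>M borel)"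
  shows "(\<integral>\<^sup>+m. ennreal (shexp_density a (\<sigma> / real k) m) *
            (\<integral>\<^sup>+t. \<integral>\<^sup>+y. ennreal (shexp_density a \<sigma> y) * indicator {..<m} y * g (y, t + real k * (m - y))
              \<partial>lborel \<partial>spread_law k \<sigma>) \<partial>lborel)
       = (\<integral>\<^sup>+y. ennreal (1 / real (Suc k)) *
            (ennreal (shexp_density a (\<sigma> / real (Suc k)) y) * (\<integral>\<^sup>+t. g (y, t) \<partial>spread_law (Suc k) \<sigma>)) \<partial>lborel)"
proof -
  let ?h = "shexp_density a (\<sigma> / real k)"
  define \<psi> where "\<psi> m y t = ennreal (?h m) * (ennreal (shexp_density a \<sigma> y) * indicator {..<m} y * g (y, t + real k * (m - y)))"
    for m y t
  have [measurable]:
    "(\<lambda>p. \<psi> (fst p) (fst (snd p)) (snd (snd p))) \<in> borel_measurable (borel \<Otimes>\<^sub>M borel \<Otimes>\<^sub>M borel)"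
    "(\<lambda>p. \<psi> (fst (fst p)) (snd (fst p)) (snd p)) \<in> borel_measurable ((borel \<Otimes>\<^sub>M borel) \<Otimes>\<^sub>M borel)"
    "(\<lambda>p. \<psi> m (fst p) (snd p)) \<in> borel_measurable (borel \<Otimes>\<^sub>M borel)" for m
    unfolding \<psi>_def by measurable
  have "(\<integral>\<^sup>+m. ennreal (?h m) * (\<integral>\<^sup>+t. \<integral>\<^sup>+y. ennreal (shexp_density a \<sigma> y) * indicator {..<m} y * g (y, t + real k * (m - y))
              \<partial>lborel \<partial>spread_law k \<sigma>) \<partial>lborel)
      = (\<integral>\<^sup>+m. \<integral>\<^sup>+t. \<integral>\<^sup>+y. \<psi> m y t \<partial>lborel \<partial>spread_law k \<sigma> \<partial>lborel)"
    unfolding \<psi>_def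
    by (intro nn_integral_cong) (subst nn_integral_cmult[symmetric], measurable, intro nn_integral_cong nn_integral_cmult[symmetric], measurable)
  also have "\<dots> = (\<integral>\<^sup>+y. \<integral>\<^sup>+m. \<integral>\<^sup>+t. \<psi> m y t \<partial>spread_law k \<sigma> \<partial>lborel \<partial>lborel)"
    by (subst lborel_pair.Fubini') (measurable, intro nn_integral_cong nn_integral_spread_law_lborel_swap, measurable)
  also have "\<dots> = (\<integral>\<^sup>+y. ennreal (shexp_density a \<sigma> y) *
      (\<integral>\<^sup>+m. ennreal (indicator {y<..} m * ?h m) * (\<integral>\<^sup>+t. g (y, t + real k * (m - y)) \<partial>spread_law k \<sigma>) \<partial>lborel) \<partial>lborel)"
  proof (rule nn_integral_cong)
    fix y :: real
    have "(\<integral>\<^sup>+t. \<psi> m y t \<partial>spread_law k \<sigma>) = (\<integral>\<^sup>+t. (ennreal (shexp_density a \<sigma> y) *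
        ennreal (indicator {y<..} m * ?h m)) * g (y, t + real k * (m - y)) \<partial>spread_law k \<sigma>)" for m
      unfolding \<psi>_def by (intro nn_integral_cong) (auto simp: indicator_def mult_ac)
    then show "(\<integral>\<^sup>+m. \<integral>\<^sup>+t. \<psi> m y t \<partial>spread_law k \<sigma> \<partial>lborel) = ennreal (shexp_density a \<sigma> y) *
      (\<integral>\<^sup>+m. ennreal (indicator {y<..} m * ?h m) * (\<integral>\<^sup>+t. g (y, t + real k * (m - y)) \<partial>spread_law k \<sigma>) \<partial>lborel)"
      by (simp add: nn_integral_cmult mult.assoc)
  qed
  also have "\<dots> = (\<integral>\<^sup>+y. ennreal (1 / real (Suc k)) *
      (ennreal (shexp_density a (\<sigma> / real (Suc k)) y) * (\<integral>\<^sup>+t. g (y, t) \<partial>spread_law (Suc k) \<sigma>)) \<partial>lborel)"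
    by (intro nn_integral_cong nn_integral_spread_observation_below_min_at[OF assms(1,2)]) measurable
  finally show ?thesis .
qed

lemma nn_integral_spread_add_observation:
  assumes "k \<ge> 1" "\<sigma> > 0" and [measurable]: "g \<in> borel_measurable (borel \<Otimes>\<^sub>M borel)"
  shows "(\<integral>\<^sup>+m. ennreal (shexp_density a (\<sigma> / real k) m) *
            (\<integral>\<^sup>+t. \<integral>\<^sup>+y. ennreal (shexp_density a \<sigma> y) * g (min y m, t + real k * (m - min y m) + (y - min y m))
              \<partial>lborel \<partial>spread_law k \<sigma>) \<partial>lborel)
       = (\<integral>\<^sup>+m. ennreal (shexp_density a (\<sigma> / real (Suc k)) m) * (\<integral>\<^sup>+t. g (m, t) \<partial>spread_law (Suc k) \<sigma>) \<partial>lborel)"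
    (is "_ = (\<integral>\<^sup>+m. ?X m \<partial>lborel)")
proof -
  let ?h = "shexp_density a (\<sigma> / real k)"
  define above where "above m t = (\<integral>\<^sup>+y. ennreal (shexp_density a \<sigma> y) * indicator {m..} y * g (m, t + (y - m)) \<partial>lborel)"
    for m t
  define below where "below m t = (\<integral>\<^sup>+y. ennreal (shexp_density a \<sigma> y) * indicator {..<m} y * g (y, t + real k * (m - y)) \<partial>lborel)"
    for m t
  have [measurable]: "case_prod above \<in> borel_measurable (borel \<Otimes>\<^sub>M borel)"
    "case_prod below \<in> borel_measurable (borel \<Otimes>\<^sub>M borel)"
    unfolding above_def below_def by measurable
  have split: "(\<integral>\<^sup>+y. ennreal (shexp_density a \<sigma> y) * g (min y m, t + real k * (m - min y m) + (y - min y m)) \<partial>lborel)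
      = above m t + below m t" for m t
    unfolding above_def below_def
    by (subst nn_integral_add[symmetric]) (auto intro!: nn_integral_cong simp: indicator_def min_def distrib_left)
  have above_eq: "(\<integral>\<^sup>+m. ennreal (?h m) * (\<integral>\<^sup>+t. above m t \<partial>spread_law k \<sigma>) \<partial>lborel)
      = (\<integral>\<^sup>+m. ennreal (real k / real (Suc k)) * ?X m \<partial>lborel)"
    unfolding above_def by (intro nn_integral_cong nn_integral_spread_observation_above_min[OF assms(1,2)]) measurable
  have below_eq: "(\<integral>\<^sup>+m. ennreal (?h m) * (\<integral>\<^sup>+t. below m t \<partial>spread_law k \<sigma>) \<partial>lborel)
      = (\<integral>\<^sup>+m. ennreal (1 / real (Suc k)) * ?X m \<partial>lborel)"
    unfolding below_def by (rule nn_integral_spread_observation_below_min[OF assms])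
  have "(\<integral>\<^sup>+m. ennreal (?h m) *
            (\<integral>\<^sup>+t. \<integral>\<^sup>+y. ennreal (shexp_density a \<sigma> y) * g (min y m, t + real k * (m - min y m) + (y - min y m))
              \<partial>lborel \<partial>spread_law k \<sigma>) \<partial>lborel)
      = (\<integral>\<^sup>+m. ennreal (?h m) * (\<integral>\<^sup>+t. above m t \<partial>spread_law k \<sigma>)
             + ennreal (?h m) * (\<integral>\<^sup>+t. below m t \<partial>spread_law k \<sigma>) \<partial>lborel)"
    by (simp add: split nn_integral_add distrib_left)
  also have "\<dots> = (\<integral>\<^sup>+m. ennreal (?h m) * (\<integral>\<^sup>+t. above m t \<partial>spread_law k \<sigma>) \<partial>lborel)
      + (\<integral>\<^sup>+m. ennreal (?h m) * (\<integral>\<^sup>+t. below m t \<partial>spread_law k \<sigma>) \<partial>lborel)"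
    by (rule nn_integral_add) measurable
  also have "\<dots> = (\<integral>\<^sup>+m. ennreal (real k / real (Suc k)) * ?X m \<partial>lborel)
      + (\<integral>\<^sup>+m. ennreal (1 / real (Suc k)) * ?X m \<partial>lborel)"
    using above_eq below_eq by simp
  also have "\<dots> = (ennreal (real k / real (Suc k)) + ennreal (1 / real (Suc k))) * (\<integral>\<^sup>+m. ?X m \<partial>lborel)"
  proof -
    have "?X \<in> borel_measurable lborel" by measurable
    then show ?thesis by (simp only: nn_integral_cmult distrib_right)
  qed
  also have "ennreal (real k / real (Suc k)) + ennreal (1 / real (Suc k)) = 1"
    by (subst ennreal_plus[symmetric]) (auto simp: add_divide_distrib[symmetric] simp del: of_nat_Suc)
  finally show ?thesis by simp
qed

lemma Min_insert_spread:
  fixes x :: "'i \<Rightarrow> real"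
  assumes "finite J" "J \<noteq> {}" "i \<notin> J"
  defines "m \<equiv> Min (x ` J)"
  shows "Min (x ` insert i J) = min (x i) m"
    and "(\<Sum>j\<in>insert i J. x j - min (x i) m)
         = (\<Sum>j\<in>J. x j - m) + real (card J) * (m - min (x i) m) + (x i - min (x i) m)"
proof -
  show "Min (x ` insert i J) = min (x i) m"
    using assms by (simp add: Min_insert)
  have "(\<Sum>j\<in>J. x j - min (x i) m) = (\<Sum>j\<in>J. (x j - m) + (m - min (x i) m))"
    by simp
  then show "(\<Sum>j\<in>insert i J. x j - min (x i) m)
         = (\<Sum>j\<in>J. x j - m) + real (card J) * (m - min (x i) m) + (x i - min (x i) m)"
    using assms(1,3) by (simp only: sum.insert sum.distrib sum_constant) (simp add: algebra_simps)
qed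

abbreviation shexp_law :: "real \<Rightarrow> real \<Rightarrow> real measure" where
  "shexp_law a \<sigma> \<equiv> density lborel (\<lambda>x. ennreal (shexp_density a \<sigma> x))"

lemma sigma_finite_shexp_law: "sigma_finite_measure (shexp_law a \<sigma>)"
  by (simp add: sigma_finite_measure.sigma_finite_iff_density_finite[OF lborel.sigma_finite_measure_axioms])

interpretation shexp_law: product_sigma_finite "\<lambda>_. shexp_law a \<sigma>" for a \<sigma>
  by (simp add: product_sigma_finite_def sigma_finite_shexp_law)

lemma nn_integral_shexp_sample_min_spread:
  fixes J :: "'i set"
  assumes "finite J" "J \<noteq> {}" "\<sigma> > 0" and "g \<in> borel_measurable (borel \<Otimes>\<^sub>M borel)"
  shows "(\<integral>\<^sup>+x. g (Min (x ` J), \<Sum>j\<in>J. x j - Min (x ` J)) \<partial>PiM J (\<lambda>_. shexp_law a \<sigma>))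
       = (\<integral>\<^sup>+m. ennreal (shexp_density a (\<sigma> / real (card J)) m) * (\<integral>\<^sup>+t. g (m, t) \<partial>spread_law (card J) \<sigma>) \<partial>lborel)"
  using assms(1,2,4)
proof (induction J arbitrary: g rule: finite_ne_induct)
  case (singleton i)
  note [measurable] = singleton
  have "(\<integral>\<^sup>+x. g (Min (x ` {i}), \<Sum>j\<in>{i}. x j - Min (x ` {i})) \<partial>PiM {i} (\<lambda>_. shexp_law a \<sigma>))
      = (\<integral>\<^sup>+y. ennreal (shexp_density a \<sigma> y) * g (y, 0) \<partial>lborel)"
    using shexp_law.product_nn_integral_singleton[where f = "\<lambda>y. g (y, 0)" and i = i]
    by (simp add: nn_integral_density)
  moreover have "(\<integral>\<^sup>+t. g (m, t) \<partial>spread_law 1 \<sigma>) = g (m, 0)" for m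
    by (rule nn_integral_spread_law_1) measurable
  ultimately show ?case
    by simp
next
  case (insert i J)
  note [measurable] = insert(5)
  define k where "k = card J"
  have "k \<ge> 1" using insert(1,2) by (simp add: k_def Suc_le_eq card_gt_0_iff)
  define G where "G m t = (\<integral>\<^sup>+y. ennreal (shexp_density a \<sigma> y) *
      g (min y m, t + real k * (m - min y m) + (y - min y m)) \<partial>lborel)" for m t
  have [measurable]: "case_prod G \<in> borel_measurable (borel \<Otimes>\<^sub>M borel)"
    unfolding G_def by measurable
  have "(\<integral>\<^sup>+x. g (Min (x ` insert i J), \<Sum>j\<in>insert i J. x j - Min (x ` insert i J)) \<partial>PiM (insert i J) (\<lambda>_. shexp_law a \<sigma>))
      = (\<integral>\<^sup>+x. \<integral>\<^sup>+y. g (Min ((x(i := y)) ` insert i J), \<Sum>j\<in>insert i J. (x(i := y)) j - Min ((x(i := y)) ` insert i J))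
           \<partial>shexp_law a \<sigma> \<partial>PiM J (\<lambda>_. shexp_law a \<sigma>))"
    using insert(1,3) by (intro shexp_law.product_nn_integral_insert) measurable
  also have "\<dots> = (\<integral>\<^sup>+x. G (Min (x ` J)) (\<Sum>j\<in>J. x j - Min (x ` J)) \<partial>PiM J (\<lambda>_. shexp_law a \<sigma>))"
  proof (rule nn_integral_cong)
    fix x :: "'i \<Rightarrow> real"
    have "(x(i := y)) ` J = x ` J" "(\<Sum>j\<in>J. (x(i := y)) j - c) = (\<Sum>j\<in>J. x j - c)" for y c
      using insert(3) by (auto intro!: sum.cong)
    then show "(\<integral>\<^sup>+y. g (Min ((x(i := y)) ` insert i J), \<Sum>j\<in>insert i J. (x(i := y)) j - Min ((x(i := y)) ` insert i J))
           \<partial>shexp_law a \<sigma>) = G (Min (x ` J)) (\<Sum>j\<in>J. x j - Min (x ` J))"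
      using Min_insert_spread[OF insert(1,2,3), of "x(i := y)" for y]
      unfolding G_def k_def by (simp add: nn_integral_density)
  qed
  also have "\<dots> = (\<integral>\<^sup>+m. ennreal (shexp_density a (\<sigma> / real k) m) * (\<integral>\<^sup>+t. G m t \<partial>spread_law k \<sigma>) \<partial>lborel)"
    using insert(4)[of "case_prod G"] by (simp add: k_def)
  also have "\<dots> = (\<integral>\<^sup>+m. ennreal (shexp_density a (\<sigma> / real (Suc k)) m) *
      (\<integral>\<^sup>+t. g (m, t) \<partial>spread_law (Suc k) \<sigma>) \<partial>lborel)"
    unfolding G_def by (rule nn_integral_spread_add_observation[OF \<open>k \<ge> 1\<close> assms(3) insert(5)])
  finally show ?case
    using insert(1,3) by (simp add: k_def)
qed

lemma nn_integral_two_shexp_samples_min_min_spread: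
  fixes J1 :: "'i set" and J2 :: "'j set"
  assumes "finite J1" "finite J2" "card J1 = k" "card J2 = l" "k \<ge> 2" "l \<ge> 2" "\<sigma> > 0"
    and [measurable]: "g \<in> borel_measurable (borel \<Otimes>\<^sub>M borel \<Otimes>\<^sub>M borel)"
  shows "(\<integral>\<^sup>+x1. \<integral>\<^sup>+x2. g (Min (x1 ` J1), Min (x2 ` J2), (\<Sum>j\<in>J1. x1 j - Min (x1 ` J1)) + (\<Sum>j\<in>J2. x2 j - Min (x2 ` J2)))
            \<partial>PiM J2 (\<lambda>_. shexp_law a2 \<sigma>) \<partial>PiM J1 (\<lambda>_. shexp_law a1 \<sigma>))
       = (\<integral>\<^sup>+m1. \<integral>\<^sup>+m2. \<integral>\<^sup>+t. ennreal (shexp_density a1 (\<sigma> / real k) m1 * shexp_density a2 (\<sigma> / real l) m2 *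
            erlang_density (k + l - 3) (1 / \<sigma>) t) * g (m1, m2, t) \<partial>lborel \<partial>lborel \<partial>lborel)"
proof -
  let ?h1 = "shexp_density a1 (\<sigma> / real k)" and ?h2 = "shexp_density a2 (\<sigma> / real l)"
  let ?e = "erlang_density (k + l - 3) (1 / \<sigma>)"
  have J: "J1 \<noteq> {}" "J2 \<noteq> {}" using assms(3-6) by auto
  define \<Psi> where "\<Psi> m1 t1 = (\<integral>\<^sup>+m2. ennreal (?h2 m2) * (\<integral>\<^sup>+t2. g (m1, m2, t1 + t2) \<partial>spread_law l \<sigma>) \<partial>lborel)"
    for m1 t1
  have [measurable]: "case_prod \<Psi> \<in> borel_measurable (borel \<Otimes>\<^sub>M borel)"
    unfolding \<Psi>_def by measurable
  have "(\<integral>\<^sup>+x1. \<integral>\<^sup>+x2. g (Min (x1 ` J1), Min (x2 ` J2), (\<Sum>j\<in>J1. x1 j - Min (x1 ` J1)) + (\<Sum>j\<in>J2. x2 j - Min (x2 ` J2)))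
            \<partial>PiM J2 (\<lambda>_. shexp_law a2 \<sigma>) \<partial>PiM J1 (\<lambda>_. shexp_law a1 \<sigma>))
      = (\<integral>\<^sup>+x1. \<Psi> (Min (x1 ` J1)) (\<Sum>j\<in>J1. x1 j - Min (x1 ` J1)) \<partial>PiM J1 (\<lambda>_. shexp_law a1 \<sigma>))"
  proof (rule nn_integral_cong)
    fix x1 :: "'i \<Rightarrow> real"
    let ?m1 = "Min (x1 ` J1)" and ?t1 = "\<Sum>j\<in>J1. x1 j - Min (x1 ` J1)"
    have "(\<lambda>(m2, t2). g (?m1, m2, ?t1 + t2)) \<in> borel_measurable (borel \<Otimes>\<^sub>M borel)"
      by measurable
    from nn_integral_shexp_sample_min_spread[OF assms(2) J(2) assms(7) this]
    show "(\<integral>\<^sup>+x2. g (?m1, Min (x2 ` J2), ?t1 + (\<Sum>j\<in>J2. x2 j - Min (x2 ` J2))) \<partial>PiM J2 (\<lambda>_. shexp_law a2 \<sigma>))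
        = \<Psi> ?m1 ?t1"
      by (simp add: \<Psi>_def assms(4))
  qed
  also have "\<dots> = (\<integral>\<^sup>+m1. ennreal (?h1 m1) * (\<integral>\<^sup>+t1. \<Psi> m1 t1 \<partial>spread_law k \<sigma>) \<partial>lborel)"
    using nn_integral_shexp_sample_min_spread[OF assms(1) J(1) assms(7), of "case_prod \<Psi>"] assms(3) by simp
  also have "\<dots> = (\<integral>\<^sup>+m1. \<integral>\<^sup>+m2. \<integral>\<^sup>+t. ennreal (?h1 m1 * ?h2 m2 * ?e t) * g (m1, m2, t) \<partial>lborel \<partial>lborel \<partial>lborel)"
  proof (rule nn_integral_cong)
    fix m1 :: real
    have "(\<integral>\<^sup>+t1. \<Psi> m1 t1 \<partial>spread_law k \<sigma>)
        = (\<integral>\<^sup>+t1. \<integral>\<^sup>+m2. \<integral>\<^sup>+t2. ennreal (?h2 m2) * g (m1, m2, t1 + t2) \<partial>spread_law l \<sigma> \<partial>lborel \<partial>spread_law k \<sigma>)"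
      unfolding \<Psi>_def by (intro nn_integral_cong nn_integral_cmult[symmetric]) measurable
    also have "\<dots> = (\<integral>\<^sup>+m2. \<integral>\<^sup>+t1. \<integral>\<^sup>+t2. ennreal (?h2 m2) * g (m1, m2, t1 + t2) \<partial>spread_law l \<sigma> \<partial>spread_law k \<sigma> \<partial>lborel)"
      by (rule nn_integral_spread_law_lborel_swap) measurable
    also have "\<dots> = (\<integral>\<^sup>+m2. \<integral>\<^sup>+t. ennreal (?e t) * (ennreal (?h2 m2) * g (m1, m2, t)) \<partial>lborel \<partial>lborel)"
      using assms(5-7) by (intro nn_integral_cong nn_integral_spread_law_add) measurable
    finally have "ennreal (?h1 m1) * (\<integral>\<^sup>+t1. \<Psi> m1 t1 \<partial>spread_law k \<sigma>)
        = (\<integral>\<^sup>+m2. \<integral>\<^sup>+t. ennreal (?h1 m1) * (ennreal (?e t) * (ennreal (?h2 m2) * g (m1, m2, t))) \<partial>lborel \<partial>lborel)"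
      by (simp add: nn_integral_cmult)
    also have "\<dots> = (\<integral>\<^sup>+m2. \<integral>\<^sup>+t. ennreal (?h1 m1 * ?h2 m2 * ?e t) * g (m1, m2, t) \<partial>lborel \<partial>lborel)"
      using assms(5-7) by (intro nn_integral_cong) (simp add: ennreal_mult' shexp_density_nonneg mult_ac)
    finally show "ennreal (?h1 m1) * (\<integral>\<^sup>+t1. \<Psi> m1 t1 \<partial>spread_law k \<sigma>)
        = (\<integral>\<^sup>+m2. \<integral>\<^sup>+t. ennreal (?h1 m1 * ?h2 m2 * ?e t) * g (m1, m2, t) \<partial>lborel \<partial>lborel)" .
  qed
  finally show ?thesis .
qed

lemma (in prob_space) distr_two_shexp_samples:
  fixes X :: "nat \<Rightarrow> nat \<Rightarrow> 'a \<Rightarrow> real"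
  assumes indep: "indep_vars (\<lambda>_. borel) (\<lambda>(i, j). X i j) ({1,2} \<times> {1..n})"
    and law1: "\<And>j. j \<in> {1..n} \<Longrightarrow> distributed M lborel (X 1 j) (\<lambda>x. ennreal (shexp_density \<mu>1 \<sigma> x))"
    and law2: "\<And>j. j \<in> {1..n} \<Longrightarrow> distributed M lborel (X 2 j) (\<lambda>x. ennreal (shexp_density \<mu>2 \<sigma> x))"
    and "n \<ge> 1"
  shows "distr M (PiM ({1,2} \<times> {1..n}) (\<lambda>_. borel)) (\<lambda>\<omega>. \<lambda>p\<in>{1,2} \<times> {1..n}. X (fst p) (snd p) \<omega>)
       = PiM ({1,2} \<times> {1..n}) (\<lambda>p. shexp_law (if fst p = 1 then \<mu>1 else \<mu>2) \<sigma>)"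
proof -
  let ?I = "{1,2} \<times> {1..n} :: (nat \<times> nat) set"
  have law: "distr M borel (X i j) = shexp_law (if i = 1 then \<mu>1 else \<mu>2) \<sigma>" if "(i, j) \<in> ?I" for i j
  proof -
    have "distr M borel (X i j) = distr M lborel (X i j)" by (rule distr_cong) auto
    then show ?thesis
      using that distributed_distr_eq_density[OF law1] distributed_distr_eq_density[OF law2] by auto
  qed
  have rv: "random_variable borel ((\<lambda>(i, j). X i j) p)" if "p \<in> ?I" for p
    using that distributed_measurable[OF law1] distributed_measurable[OF law2] by auto
  have "?I \<noteq> {}" using assms(4) by auto
  then have "distr M (PiM ?I (\<lambda>_. borel)) (\<lambda>\<omega>. \<lambda>p\<in>?I. (\<lambda>(i, j). X i j) p \<omega>)
      = PiM ?I (\<lambda>p. distr M borel ((\<lambda>(i, j). X i j) p))"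
    using indep_vars_iff_distr_eq_PiM'[where I = ?I and M' = "\<lambda>_. borel" and X = "\<lambda>(i, j). X i j", OF _ rv] indep by blast
  also have "\<dots> = PiM ?I (\<lambda>p. shexp_law (if fst p = 1 then \<mu>1 else \<mu>2) \<sigma>)"
    by (rule PiM_cong) (auto simp: law)
  finally show ?thesis
    by (simp add: case_prod_beta)
qed

lemma restrict_image_section:
  "i \<in> I \<Longrightarrow> (\<lambda>p\<in>I \<times> J. f (fst p) (snd p)) ` ({i} \<times> J) = f i ` J"
proof -
  assume "i \<in> I"
  have pairs: "{i} \<times> J = Pair i ` J" by auto
  show ?thesis
    unfolding pairs image_image using \<open>i \<in> I\<close> by (intro image_cong) simp_all
qed

lemma restrict_sum_section:
  "i \<in> I \<Longrightarrow> (\<Sum>p\<in>{i} \<times> J. (\<lambda>p\<in>I \<times> J. f (fst p) (snd p)) p - c) = (\<Sum>j\<in>J. f i j - c)"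
proof -
  assume "i \<in> I"
  have "{i} \<times> J = Pair i ` J" by auto
  then show ?thesis
    using \<open>i \<in> I\<close> by (simp add: sum.reindex inj_on_def)
qed

lemma (in prob_space) nn_integral_two_sample_vector:
  fixes X :: "nat \<Rightarrow> nat \<Rightarrow> 'a \<Rightarrow> real"
  assumes indep: "indep_vars (\<lambda>_. borel) (\<lambda>(i, j). X i j) ({1,2} \<times> {1..n})"
    and law1: "\<And>j. j \<in> {1..n} \<Longrightarrow> distributed M lborel (X 1 j) (\<lambda>x. ennreal (shexp_density \<mu>1 \<sigma> x))"
    and law2: "\<And>j. j \<in> {1..n} \<Longrightarrow> distributed M lborel (X 2 j) (\<lambda>x. ennreal (shexp_density \<mu>2 \<sigma> x))"
    and "n \<ge> 1" and G: "G \<in> borel_measurable (PiM ({1,2} \<times> {1..n}) (\<lambda>_. borel))"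
  shows "(\<integral>\<^sup>+\<omega>. G (\<lambda>p\<in>{1,2} \<times> {1..n}. X (fst p) (snd p) \<omega>) \<partial>M)
       = (\<integral>\<^sup>+x1. \<integral>\<^sup>+x2. G (merge ({1} \<times> {1..n}) ({2} \<times> {1..n}) (x1, x2))
            \<partial>PiM ({2} \<times> {1..n}) (\<lambda>_. shexp_law \<mu>2 \<sigma>) \<partial>PiM ({1} \<times> {1..n}) (\<lambda>_. shexp_law \<mu>1 \<sigma>))"
proof -
  define J1 where "J1 = ({1} \<times> {1..n} :: (nat \<times> nat) set)"
  define J2 where "J2 = ({2} \<times> {1..n} :: (nat \<times> nat) set)"
  have I: "{1,2} \<times> {1..n} = J1 \<union> J2" "J1 \<inter> J2 = {}" "finite J1" "finite J2"
    by (auto simp: J1_def J2_def)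
  define D where "D p = shexp_law (if fst p = 1 then \<mu>1 else \<mu>2) \<sigma>" for p :: "nat \<times> nat"
  interpret product_sigma_finite D
    by (simp add: product_sigma_finite_def D_def sigma_finite_shexp_law)
  have sets_D: "sets (PiM ({1,2} \<times> {1..n}) D) = sets (PiM ({1,2} \<times> {1..n}) (\<lambda>_. borel))"
    by (rule sets_PiM_cong) (simp_all add: D_def)
  have [measurable]: "G \<in> borel_measurable (PiM (J1 \<union> J2) D)"
    unfolding I(1)[symmetric] measurable_cong_sets[OF sets_D refl] by (rule G)
  have "(\<integral>\<^sup>+\<omega>. G (\<lambda>p\<in>{1,2} \<times> {1..n}. X (fst p) (snd p) \<omega>) \<partial>M)
      = (\<integral>\<^sup>+x. G x \<partial>distr M (PiM ({1,2} \<times> {1..n}) (\<lambda>_. borel)) (\<lambda>\<omega>. \<lambda>p\<in>{1,2} \<times> {1..n}. X (fst p) (snd p) \<omega>))"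
    using distributed_measurable[OF law1] distributed_measurable[OF law2] G
    by (intro nn_integral_distr[symmetric] measurable_restrict) auto
  also have "distr M (PiM ({1,2} \<times> {1..n}) (\<lambda>_. borel)) (\<lambda>\<omega>. \<lambda>p\<in>{1,2} \<times> {1..n}. X (fst p) (snd p) \<omega>)
      = PiM (J1 \<union> J2) D"
    unfolding D_def I(1)[symmetric] by (rule distr_two_shexp_samples[OF indep law1 law2 assms(4)])
  also have "(\<integral>\<^sup>+x. G x \<partial>PiM (J1 \<union> J2) D)
      = (\<integral>\<^sup>+x1. \<integral>\<^sup>+x2. G (merge J1 J2 (x1, x2)) \<partial>PiM J2 (\<lambda>_. shexp_law \<mu>2 \<sigma>) \<partial>PiM J1 (\<lambda>_. shexp_law \<mu>1 \<sigma>))"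
  proof -
    have "PiM J1 D = PiM J1 (\<lambda>_. shexp_law \<mu>1 \<sigma>)" "PiM J2 D = PiM J2 (\<lambda>_. shexp_law \<mu>2 \<sigma>)"
      by (auto intro!: PiM_cong simp: D_def J1_def J2_def)
    then show ?thesis
      by (metis product_nn_integral_fold[OF I(2-4)] \<open>G \<in> borel_measurable (PiM (J1 \<union> J2) D)\<close>)
  qed
  finally show ?thesis
    unfolding J1_def J2_def .
qed

lemma (in prob_space) nn_integral_two_sample_min_min_spread:
  fixes X :: "nat \<Rightarrow> nat \<Rightarrow> 'a \<Rightarrow> real"
  assumes indep: "indep_vars (\<lambda>_. borel) (\<lambda>(i, j). X i j) ({1,2} \<times> {1..n})"
    and law1: "\<And>j. j \<in> {1..n} \<Longrightarrow> distributed M lborel (X 1 j) (\<lambda>x. ennreal (shexp_density \<mu>1 \<sigma> x))"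
    and law2: "\<And>j. j \<in> {1..n} \<Longrightarrow> distributed M lborel (X 2 j) (\<lambda>x. ennreal (shexp_density \<mu>2 \<sigma> x))"
    and "n \<ge> 2" "\<sigma> > 0" and [measurable]: "g \<in> borel_measurable (borel \<Otimes>\<^sub>M borel \<Otimes>\<^sub>M borel)"
  shows "(\<integral>\<^sup>+\<omega>. g (Xmin X n 1 \<omega>, Xmin X n 2 \<omega>, Sstat X n \<omega>) \<partial>M)
       = (\<integral>\<^sup>+m1. \<integral>\<^sup>+m2. \<integral>\<^sup>+t. ennreal (shexp_density \<mu>1 (\<sigma> / real n) m1 * shexp_density \<mu>2 (\<sigma> / real n) m2 *
            erlang_density (2 * n - 3) (1 / \<sigma>) t) * g (m1, m2, t) \<partial>lborel \<partial>lborel \<partial>lborel)"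
proof -
  define I where "I = ({1,2} \<times> {1..n} :: (nat \<times> nat) set)"
  define J1 where "J1 = ({1} \<times> {1..n} :: (nat \<times> nat) set)"
  define J2 where "J2 = ({2} \<times> {1..n} :: (nat \<times> nat) set)"
  have J: "J1 \<subseteq> I" "J2 \<subseteq> I" "J1 \<inter> J2 = {}" "finite J1" "finite J2" "card J1 = n" "card J2 = n"
    by (auto simp: I_def J1_def J2_def card_cartesian_product)
  define T where "T x = (Min (x ` J1), Min (x ` J2), (\<Sum>p\<in>J1. x p - Min (x ` J1)) + (\<Sum>p\<in>J2. x p - Min (x ` J2)))"
    for x :: "nat \<times> nat \<Rightarrow> real"
  have "(Xmin X n 1 \<omega>, Xmin X n 2 \<omega>, Sstat X n \<omega>) = T (\<lambda>p\<in>I. X (fst p) (snd p) \<omega>)" for \<omega>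
    unfolding T_def Sstat_def Xmin_def J1_def J2_def I_def
    using restrict_image_section[where I = "{1,2}" and J = "{1..n}" and f = "\<lambda>i j. X i j \<omega>"]
      restrict_sum_section[where I = "{1,2}" and J = "{1..n}" and f = "\<lambda>i j. X i j \<omega>"]
    by simp
  moreover have "(\<lambda>x. g (T x)) \<in> borel_measurable (PiM I (\<lambda>_. borel))"
  proof -
    have [measurable]: "(\<lambda>x :: nat \<times> nat \<Rightarrow> real. x p) \<in> borel_measurable (PiM I (\<lambda>_. borel))" if "p \<in> I" for p
      using measurable_component_singleton[OF that, of "\<lambda>_. borel"] by simp
    have [measurable]: "(\<lambda>x :: nat \<times> nat \<Rightarrow> real. Min (x ` J)) \<in> borel_measurable (PiM I (\<lambda>_. borel))"
      if "J \<subseteq> I" "finite J" for J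
      using that by (intro borel_measurable_Min) auto
    have [measurable]: "(\<lambda>x :: nat \<times> nat \<Rightarrow> real. \<Sum>p\<in>J. x p - Min (x ` J)) \<in> borel_measurable (PiM I (\<lambda>_. borel))"
      if "J \<subseteq> I" "finite J" for J
      using that by (intro borel_measurable_sum borel_measurable_diff) auto
    show ?thesis unfolding T_def using J by measurable
  qed
  ultimately have "(\<integral>\<^sup>+\<omega>. g (Xmin X n 1 \<omega>, Xmin X n 2 \<omega>, Sstat X n \<omega>) \<partial>M)
      = (\<integral>\<^sup>+x1. \<integral>\<^sup>+x2. g (T (merge J1 J2 (x1, x2))) \<partial>PiM J2 (\<lambda>_. shexp_law \<mu>2 \<sigma>) \<partial>PiM J1 (\<lambda>_. shexp_law \<mu>1 \<sigma>))"
    using nn_integral_two_sample_vector[OF indep law1 law2, of "\<lambda>x. g (T x)"] assms(4)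
    unfolding I_def J1_def J2_def by simp
  also have "\<dots> = (\<integral>\<^sup>+x1. \<integral>\<^sup>+x2. g (Min (x1 ` J1), Min (x2 ` J2),
      (\<Sum>p\<in>J1. x1 p - Min (x1 ` J1)) + (\<Sum>p\<in>J2. x2 p - Min (x2 ` J2))) \<partial>PiM J2 (\<lambda>_. shexp_law \<mu>2 \<sigma>) \<partial>PiM J1 (\<lambda>_. shexp_law \<mu>1 \<sigma>))"
  proof -
    have "merge J1 J2 (x1, x2) ` J1 = x1 ` J1" "merge J1 J2 (x1, x2) ` J2 = x2 ` J2"
      "(\<Sum>p\<in>J1. merge J1 J2 (x1, x2) p - c) = (\<Sum>p\<in>J1. x1 p - c)"
      "(\<Sum>p\<in>J2. merge J1 J2 (x1, x2) p - c) = (\<Sum>p\<in>J2. x2 p - c)" for x1 x2 :: "nat \<times> nat \<Rightarrow> real" and c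
      using J(3) by (force simp: merge_def image_iff intro!: sum.cong)+
    then show ?thesis by (simp add: T_def)
  qed
  also have "\<dots> = (\<integral>\<^sup>+m1. \<integral>\<^sup>+m2. \<integral>\<^sup>+t. ennreal (shexp_density \<mu>1 (\<sigma> / real n) m1 * shexp_density \<mu>2 (\<sigma> / real n) m2 *
            erlang_density (n + n - 3) (1 / \<sigma>) t) * g (m1, m2, t) \<partial>lborel \<partial>lborel \<partial>lborel)"
    by (rule nn_integral_two_shexp_samples_min_min_spread[OF J(4-7) assms(4,4,5)]) measurable
  finally show ?thesis
    by (simp add: mult_2)
qed

section \<open>Change of variables to \<open>(U', V, W)\<close>\<close>

definition uvw_map :: "real \<Rightarrow> real \<Rightarrow> real \<Rightarrow> real \<Rightarrow> real \<Rightarrow> real \<Rightarrow> real \<times> real \<times> real" where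
  "uvw_map \<mu>1 \<mu>2 \<sigma> m1 m2 t =
     ((min m1 m2 - (\<mu>1 * (if m2 \<le> m1 then 1 else 0) + \<mu>2 * (if m1 < m2 then 1 else 0))) / \<sigma>,
      t / \<sigma>, (max m1 m2 - min m1 m2) / t)"

lemma measurable_uvw_map [measurable (raw)]:
  assumes [measurable]: "f \<in> borel_measurable M" "h \<in> borel_measurable M" "k \<in> borel_measurable M"
  shows "(\<lambda>x. uvw_map \<mu>1 \<mu>2 \<sigma> (f x) (h x) (k x)) \<in> measurable M (borel \<Otimes>\<^sub>M borel \<Otimes>\<^sub>M borel)"
  unfolding uvw_map_def by measurable

lemma Uprime_Vstat_Wstat_eq_uvw_map:
  "(Uprime X n \<mu>1 \<mu>2 \<sigma> \<omega>, Vstat X n \<sigma> \<omega>, Wstat X n \<omega>)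
     = uvw_map \<mu>1 \<mu>2 \<sigma> (Xmin X n 1 \<omega>) (Xmin X n 2 \<omega>) (Sstat X n \<omega>)"
  by (simp add: uvw_map_def Uprime_def Vstat_def Wstat_def Z1_def Z2_def muM_def)

lemma measurable_Uprime_Vstat_Wstat:
  assumes "\<And>i j. i \<in> {1,2} \<Longrightarrow> j \<in> {1..n} \<Longrightarrow> X i j \<in> borel_measurable M"
  shows "(\<lambda>\<omega>. (Uprime X n \<mu>1 \<mu>2 \<sigma> \<omega>, Vstat X n \<sigma> \<omega>, Wstat X n \<omega>)) \<in> measurable M (borel \<Otimes>\<^sub>M borel \<Otimes>\<^sub>M borel)"
proof -
  have [measurable]: "Xmin X n i \<in> borel_measurable M" if "i \<in> {1,2}" for i
    unfolding Xmin_def using that assms by (intro borel_measurable_Min) auto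
  have [measurable]: "Sstat X n \<in> borel_measurable M"
    unfolding Sstat_def using assms by (intro borel_measurable_sum borel_measurable_diff) auto
  show ?thesis
    unfolding Uprime_Vstat_Wstat_eq_uvw_map by measurable
qed

lemma uvw_map_cases:
  fixes g :: "real \<times> real \<times> real \<Rightarrow> ennreal"
  assumes "t > 0"
  shows "g (uvw_map \<mu>1 \<mu>2 \<sigma> m1 m2 t)
       = indicator {0<..} ((m2 - m1) / t) * g ((m1 - \<mu>2) / \<sigma>, t / \<sigma>, (m2 - m1) / t)
       + indicator {0..} ((m1 - m2) / t) * g ((m2 - \<mu>1) / \<sigma>, t / \<sigma>, (m1 - m2) / t)"
proof (cases "m1 < m2")
  case True
  then have "\<not> 0 \<le> (m1 - m2) / t" "0 < (m2 - m1) / t"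
    using assms by (auto simp: zero_le_divide_iff)
  then show ?thesis using True by (simp add: uvw_map_def indicator_def)
next
  case False
  then have "0 \<le> (m1 - m2) / t" "\<not> 0 < (m2 - m1) / t"
    using assms by (auto simp: zero_less_divide_iff)
  then show ?thesis using False by (simp add: uvw_map_def indicator_def)
qed

lemma nn_integral_lborel_ratio:
  assumes "t > 0" and [measurable]: "case_prod F \<in> borel_measurable (borel \<Otimes>\<^sub>M borel)"
  shows "(\<integral>\<^sup>+b. F b ((b - a) / t) \<partial>lborel) = (\<integral>\<^sup>+w. ennreal t * F (a + t * w) w \<partial>lborel)"
  using assms(1) nn_integral_real_affine[of "\<lambda>b. F b ((b - a) / t)" t a]
  by (simp add: nn_integral_cmult)

lemma nn_integral_gap_ratio_substitution:
  fixes hA hB e :: "real \<Rightarrow> real" and Ws :: "real set" and g :: "real \<times> real \<times> real \<Rightarrow> ennreal"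
  assumes "\<sigma> > 0"
    and [measurable]: "hA \<in> borel_measurable borel" "hB \<in> borel_measurable borel"
      "e \<in> borel_measurable borel" "Ws \<in> sets borel" "g \<in> borel_measurable (borel \<Otimes>\<^sub>M borel \<Otimes>\<^sub>M borel)"
    and nonneg: "\<And>x. hA x \<ge> 0" "\<And>x. hB x \<ge> 0" "\<And>x. e x \<ge> 0"
    and e_nonpos: "\<And>x. x \<le> 0 \<Longrightarrow> e x = 0"
  shows "(\<integral>\<^sup>+a. \<integral>\<^sup>+b. \<integral>\<^sup>+t. ennreal (hA a * hB b * e t) * indicator Ws ((b - a) / t) *
            g ((a - \<mu>) / \<sigma>, t / \<sigma>, (b - a) / t) \<partial>lborel \<partial>lborel \<partial>lborel)
       = (\<integral>\<^sup>+u. \<integral>\<^sup>+v. \<integral>\<^sup>+w. ennreal (\<sigma> * \<sigma> * (\<sigma> * v) * hA (\<mu> + \<sigma> * u) * hB (\<mu> + \<sigma> * u + \<sigma> * v * w) * e (\<sigma> * v)) *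
            indicator Ws w * g (u, v, w) \<partial>lborel \<partial>lborel \<partial>lborel)"
proof -
  define F where "F a t b w = ennreal (hA a * hB b * e t) * indicator Ws w * g ((a - \<mu>) / \<sigma>, t / \<sigma>, w)" for a t b w
  define L where "L a t w = ennreal t * F a t (a + t * w) w" for a t w
  have [measurable]: "(\<lambda>p. F a t (fst p) (snd p)) \<in> borel_measurable (borel \<Otimes>\<^sub>M borel)"
    "(\<lambda>p. L (fst p) (fst (snd p)) (snd (snd p))) \<in> borel_measurable (borel \<Otimes>\<^sub>M borel \<Otimes>\<^sub>M borel)"
    "(\<lambda>p. L (fst (fst p)) (snd (fst p)) (snd p)) \<in> borel_measurable ((borel \<Otimes>\<^sub>M borel) \<Otimes>\<^sub>M borel)"
    "L a t \<in> borel_measurable lborel" for a t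
    unfolding F_def L_def by measurable
  have "(\<integral>\<^sup>+a. \<integral>\<^sup>+b. \<integral>\<^sup>+t. F a t b ((b - a) / t) \<partial>lborel \<partial>lborel \<partial>lborel)
      = (\<integral>\<^sup>+a. \<integral>\<^sup>+t. \<integral>\<^sup>+b. F a t b ((b - a) / t) \<partial>lborel \<partial>lborel \<partial>lborel)"
  proof (rule nn_integral_cong)
    fix a :: real
    have "(\<lambda>(b, t). F a t b ((b - a) / t)) \<in> borel_measurable (lborel \<Otimes>\<^sub>M lborel)"
      unfolding F_def by measurable
    from lborel_pair.Fubini'[OF this]
    show "(\<integral>\<^sup>+b. \<integral>\<^sup>+t. F a t b ((b - a) / t) \<partial>lborel \<partial>lborel) = (\<integral>\<^sup>+t. \<integral>\<^sup>+b. F a t b ((b - a) / t) \<partial>lborel \<partial>lborel)"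
      by simp
  qed
  also have "\<dots> = (\<integral>\<^sup>+a. \<integral>\<^sup>+t. \<integral>\<^sup>+w. L a t w \<partial>lborel \<partial>lborel \<partial>lborel)"
  proof (rule nn_integral_cong, rule nn_integral_cong)
    fix a t :: real
    show "(\<integral>\<^sup>+b. F a t b ((b - a) / t) \<partial>lborel) = (\<integral>\<^sup>+w. L a t w \<partial>lborel)"
    proof (cases "t > 0")
      case False
      then show ?thesis using e_nonpos[of t] by (simp add: F_def L_def)
    next
      case True
      then show ?thesis unfolding L_def by (rule nn_integral_lborel_ratio) measurable
    qed
  qed
  also have "\<dots> = (\<integral>\<^sup>+u. \<integral>\<^sup>+v. \<integral>\<^sup>+w. ennreal (\<sigma> * \<sigma>) * L (\<mu> + \<sigma> * u) (\<sigma> * v) w \<partial>lborel \<partial>lborel \<partial>lborel)"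
    using assms(1) nn_integral_lborel_affine2[of \<sigma> "\<lambda>a t. \<integral>\<^sup>+w. L a t w \<partial>lborel" \<mu>]
    by (simp add: nn_integral_cmult[symmetric])
  also have "\<dots> = (\<integral>\<^sup>+u. \<integral>\<^sup>+v. \<integral>\<^sup>+w. ennreal (\<sigma> * \<sigma> * (\<sigma> * v) * hA (\<mu> + \<sigma> * u) * hB (\<mu> + \<sigma> * u + \<sigma> * v * w) * e (\<sigma> * v)) *
            indicator Ws w * g (u, v, w) \<partial>lborel \<partial>lborel \<partial>lborel)"
  proof (intro nn_integral_cong)
    fix u v w :: real
    show "ennreal (\<sigma> * \<sigma>) * L (\<mu> + \<sigma> * u) (\<sigma> * v) w = ennreal (\<sigma> * \<sigma> * (\<sigma> * v) * hA (\<mu> + \<sigma> * u) *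
        hB (\<mu> + \<sigma> * u + \<sigma> * v * w) * e (\<sigma> * v)) * indicator Ws w * g (u, v, w)"
    proof (cases "v > 0")
      case False
      then have "\<sigma> * v \<le> 0" using assms(1) by (simp add: mult_nonneg_nonpos)
      then show ?thesis using e_nonpos[of "\<sigma> * v"] by (simp add: F_def L_def)
    next
      case True
      then show ?thesis
        unfolding F_def L_def using assms(1) nonneg
        by (simp add: ennreal_mult' mult.assoc mult.left_commute)
    qed
  qed
  finally show ?thesis
    by (simp add: F_def)
qed

text \<open>The density of \<open>(U', V, W)\<close> on the event that the sample with location \<open>b\<close> has the smaller
  minimum, \<open>a\<close> being the location of the other sample; \<open>\<sigma>\<^sup>2 (\<sigma> v)\<close> is the Jacobian of
  \<open>(m1, m2, t) \<mapsto> (u, v, w)\<close>.\<close>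

definition branch_density :: "nat \<Rightarrow> real \<Rightarrow> real \<Rightarrow> real \<Rightarrow> real \<Rightarrow> real \<Rightarrow> real \<Rightarrow> real" where
  "branch_density n \<sigma> a b u v w = \<sigma> * \<sigma> * (\<sigma> * v) * shexp_density a (\<sigma> / real n) (b + \<sigma> * u) *
     shexp_density b (\<sigma> / real n) (b + \<sigma> * u + \<sigma> * v * w) * erlang_density (2 * n - 3) (1 / \<sigma>) (\<sigma> * v)"

lemma branch_density_eq:
  assumes "n \<ge> 2" "\<sigma> > 0"
  shows "branch_density n \<sigma> a b u v w
       = (if a \<le> b + \<sigma> * u \<and> 0 \<le> u + v * w \<and> 0 \<le> v then
            real n ^ 2 * v ^ (2 * n - 2) * exp (- v * (1 + real n * w)) * exp (- 2 * real n * u) / fact (2 * n - 3) *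
            exp (- real n * (b - a) / \<sigma>)
          else 0)"
proof -
  define N where "N = 2 * n - 3"
  have N: "2 * n - 2 = Suc N" using assms(1) by (simp add: N_def)
  have n: "n > 0" using assms(1) by simp
  have gap: "b \<le> b + \<sigma> * u + \<sigma> * v * w \<longleftrightarrow> 0 \<le> u + v * w"
    using assms(2) zero_le_mult_iff[of \<sigma> "u + v * w"] by (simp add: algebra_simps)
  have v: "\<sigma> * v < 0 \<longleftrightarrow> v < 0" using assms(2) by (simp add: mult_less_0_iff)
  have exps: "exp (- real n * (b + \<sigma> * u - a) / \<sigma>) * exp (- real n * (b + \<sigma> * u + \<sigma> * v * w - b) / \<sigma>) *
      exp (- (\<sigma> * v) * (1 / \<sigma>))
      = exp (- v * (1 + real n * w)) * exp (- 2 * real n * u) * exp (- real n * (b - a) / \<sigma>)"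
    unfolding exp_add[symmetric] using assms(2) by (simp add: field_simps)
  have powers: "\<sigma> * \<sigma> * (\<sigma> * v) * (real n / \<sigma>) * (real n / \<sigma>) * ((1 / \<sigma>) ^ Suc N * (\<sigma> * v) ^ N)
      = real n ^ 2 * v ^ Suc N"
    using assms(2) by (simp add: power_mult_distrib power_one_over power2_eq_square field_simps)
  show ?thesis
  proof (cases "a \<le> b + \<sigma> * u \<and> 0 \<le> u + v * w \<and> 0 \<le> v")
    case False
    then show ?thesis
      using gap v assms(2) n by (auto simp: branch_density_def shexp_density_scaled erlang_density_def)
  next
    case True
    then have "\<sigma> * \<sigma> * (\<sigma> * v) * shexp_density a (\<sigma> / real n) (b + \<sigma> * u) *
        shexp_density b (\<sigma> / real n) (b + \<sigma> * u + \<sigma> * v * w) * erlang_density (2 * n - 3) (1 / \<sigma>) (\<sigma> * v)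
      = (\<sigma> * \<sigma> * (\<sigma> * v) * (real n / \<sigma>) * (real n / \<sigma>) * ((1 / \<sigma>) ^ Suc N * (\<sigma> * v) ^ N)) / fact N *
        (exp (- real n * (b + \<sigma> * u - a) / \<sigma>) * exp (- real n * (b + \<sigma> * u + \<sigma> * v * w - b) / \<sigma>) *
         exp (- (\<sigma> * v) * (1 / \<sigma>)))"
      using gap v assms(2) n
      unfolding shexp_density_scaled[OF assms(2) n] erlang_density_def N_def[symmetric]
      by (simp add: field_simps)
    also have "\<dots> = real n ^ 2 * v ^ Suc N / fact N *
        (exp (- v * (1 + real n * w)) * exp (- 2 * real n * u) * exp (- real n * (b - a) / \<sigma>))"
      unfolding exps powers ..
    finally show ?thesis
      using True unfolding branch_density_def N N_def[symmetric] by simp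
  qed
qed

lemma branch_density_nonneg: "n \<ge> 2 \<Longrightarrow> \<sigma> > 0 \<Longrightarrow> branch_density n \<sigma> a b u v w \<ge> 0"
  by (simp add: branch_density_eq)

lemma nn_integral_uvw_map_branches:
  assumes "n \<ge> 2" "\<sigma> > 0" and [measurable]: "g \<in> borel_measurable (borel \<Otimes>\<^sub>M borel \<Otimes>\<^sub>M borel)"
  shows "(\<integral>\<^sup>+m1. \<integral>\<^sup>+m2. \<integral>\<^sup>+t. ennreal (shexp_density \<mu>1 (\<sigma> / real n) m1 * shexp_density \<mu>2 (\<sigma> / real n) m2 *
            erlang_density (2 * n - 3) (1 / \<sigma>) t) * g (uvw_map \<mu>1 \<mu>2 \<sigma> m1 m2 t) \<partial>lborel \<partial>lborel \<partial>lborel)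
       = (\<integral>\<^sup>+u. \<integral>\<^sup>+v. \<integral>\<^sup>+w. ennreal (branch_density n \<sigma> \<mu>1 \<mu>2 u v w) * indicator {0<..} w * g (u, v, w)
            \<partial>lborel \<partial>lborel \<partial>lborel)
       + (\<integral>\<^sup>+u. \<integral>\<^sup>+v. \<integral>\<^sup>+w. ennreal (branch_density n \<sigma> \<mu>2 \<mu>1 u v w) * indicator {0..} w * g (u, v, w)
            \<partial>lborel \<partial>lborel \<partial>lborel)"
proof -
  let ?h1 = "shexp_density \<mu>1 (\<sigma> / real n)" and ?h2 = "shexp_density \<mu>2 (\<sigma> / real n)"
  let ?e = "erlang_density (2 * n - 3) (1 / \<sigma>)"
  have nonneg: "?h1 x \<ge> 0" "?h2 x \<ge> 0" "?e x \<ge> 0" for x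
    using assms(1,2) by (simp_all add: shexp_density_nonneg)
  have e_nonpos: "?e x = 0" if "x \<le> 0" for x
    using assms(1) that by (simp add: erlang_density_nonpos)
  define A where "A m1 m2 t = ennreal (?h1 m1 * ?h2 m2 * ?e t) * indicator {0<..} ((m2 - m1) / t) *
      g ((m1 - \<mu>2) / \<sigma>, t / \<sigma>, (m2 - m1) / t)" for m1 m2 t
  define B where "B m1 m2 t = ennreal (?h2 m2 * ?h1 m1 * ?e t) * indicator {0..} ((m1 - m2) / t) *
      g ((m2 - \<mu>1) / \<sigma>, t / \<sigma>, (m1 - m2) / t)" for m1 m2 t
  have [measurable]:
    "(\<lambda>p. A (fst p) (fst (snd p)) (snd (snd p))) \<in> borel_measurable (borel \<Otimes>\<^sub>M borel \<Otimes>\<^sub>M borel)"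
    "(\<lambda>p. B (fst p) (fst (snd p)) (snd (snd p))) \<in> borel_measurable (borel \<Otimes>\<^sub>M borel \<Otimes>\<^sub>M borel)"
    "(\<lambda>p. B (fst (fst p)) (snd (fst p)) (snd p)) \<in> borel_measurable ((borel \<Otimes>\<^sub>M borel) \<Otimes>\<^sub>M borel)"
    unfolding A_def B_def by measurable
  have "ennreal (?h1 m1 * ?h2 m2 * ?e t) * g (uvw_map \<mu>1 \<mu>2 \<sigma> m1 m2 t) = A m1 m2 t + B m1 m2 t" for m1 m2 t
  proof (cases "t > 0")
    case True
    then show ?thesis
      unfolding A_def B_def uvw_map_cases[OF True, of g] by (simp add: distrib_left mult_ac)
  next
    case False
    then show ?thesis unfolding A_def B_def using e_nonpos[of t] by simp
  qed
  then have "(\<integral>\<^sup>+m1. \<integral>\<^sup>+m2. \<integral>\<^sup>+t. ennreal (?h1 m1 * ?h2 m2 * ?e t) * g (uvw_map \<mu>1 \<mu>2 \<sigma> m1 m2 t) \<partial>lborel \<partial>lborel \<partial>lborel)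
      = (\<integral>\<^sup>+m1. \<integral>\<^sup>+m2. \<integral>\<^sup>+t. A m1 m2 t \<partial>lborel \<partial>lborel \<partial>lborel)
      + (\<integral>\<^sup>+m1. \<integral>\<^sup>+m2. \<integral>\<^sup>+t. B m1 m2 t \<partial>lborel \<partial>lborel \<partial>lborel)"
    by (simp add: nn_integral_lborel3_add)
  also have "(\<integral>\<^sup>+m1. \<integral>\<^sup>+m2. \<integral>\<^sup>+t. B m1 m2 t \<partial>lborel \<partial>lborel \<partial>lborel)
      = (\<integral>\<^sup>+m2. \<integral>\<^sup>+m1. \<integral>\<^sup>+t. B m1 m2 t \<partial>lborel \<partial>lborel \<partial>lborel)"
    by (intro lborel_pair.Fubini'[symmetric]) measurable
  finally show ?thesis
    unfolding A_def B_def branch_density_def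
    using assms(2) nonneg e_nonpos by (simp add: nn_integral_gap_ratio_substitution)
qed

lemma Gamma_eq_fact_2n_3: "n \<ge> 2 \<Longrightarrow> Gamma (2 * (real n - 1)) = fact (2 * n - 3)"
proof -
  assume "n \<ge> 2"
  then have "2 * (real n - 1) = 1 + real (2 * n - 3)" by (simp add: of_nat_diff)
  then show ?thesis by (simp only: Gamma_fact)
qed

lemma two_branch_cases:
  fixes p u v w C E1 E2 :: real
  assumes "u \<noteq> 0" "u \<noteq> \<bar>p\<bar>" "u \<noteq> - \<bar>p\<bar>" "v \<noteq> 0" "w \<noteq> 0" "u + v * w \<noteq> 0"
    and "Em = (if p \<ge> 0 then E2 else E1)" "Ep = (if p \<ge> 0 then E1 else E2)"
  shows "(if p \<le> u \<and> 0 \<le> u + v * w \<and> 0 \<le> v then C * E1 else 0) * (if w > 0 then 1 else 0)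
       + (if - p \<le> u \<and> 0 \<le> u + v * w \<and> 0 \<le> v then C * E2 else 0) * (if w \<ge> 0 then 1 else 0)
     = (if w > 0 \<and> ((- \<bar>p\<bar> < u \<and> u < 0 \<and> - u / w < v) \<or> (0 < u \<and> u < \<bar>p\<bar> \<and> 0 < v)) then C * Em
        else if w > 0 \<and> \<bar>p\<bar> < u \<and> 0 < v then C * (Em + Ep) else 0)"
proof (cases "w > 0")
  case False
  then show ?thesis using assms by simp
next
  case w: True
  have vw: "- u / w < v \<longleftrightarrow> 0 < u + v * w" using w by (simp add: field_simps) linarith
  show ?thesis
  proof (cases "v > 0")
    case False
    then have "v < 0" using assms by simp
    moreover from this have "u + v * w < u" using w by (simp add: mult_neg_pos)
    ultimately show ?thesis using w vw by auto
  next
    case v: True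
    then have "0 < u \<Longrightarrow> 0 < u + v * w" using w by (simp add: add_pos_pos)
    then show ?thesis using v w vw assms by (cases "p \<ge> 0") (auto simp: algebra_simps)
  qed
qed

lemma branch_densities_eq_cond_dens3:
  assumes "n \<ge> 2" "\<sigma> > 0"
    and generic: "u \<noteq> 0" "u \<noteq> mu_par n \<mu>1 \<mu>2 \<sigma> / real n" "u \<noteq> - mu_par n \<mu>1 \<mu>2 \<sigma> / real n"
      "v \<noteq> 0" "w \<noteq> 0" "u + v * w \<noteq> 0"
  shows "branch_density n \<sigma> \<mu>1 \<mu>2 u v w * (if w > 0 then 1 else 0)
       + branch_density n \<sigma> \<mu>2 \<mu>1 u v w * (if w \<ge> 0 then 1 else 0)
     = cond_dens3 n (mu_par n \<mu>1 \<mu>2 \<sigma>) 1 u v w"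
proof -
  define p where "p = (\<mu>1 - \<mu>2) / \<sigma>"
  define \<mu> where "\<mu> = mu_par n \<mu>1 \<mu>2 \<sigma>"
  define C where "C = real n ^ 2 * v ^ (2 * n - 2) * exp (- v * (1 + real n * w)) * exp (- 2 * real n * u) / fact (2 * n - 3)"
  have "max \<mu>1 \<mu>2 - min \<mu>1 \<mu>2 = \<bar>\<mu>1 - \<mu>2\<bar>" by (simp add: max_def min_def abs_if)
  then have \<mu>: "\<mu> = real n * \<bar>p\<bar>"
    unfolding \<mu>_def mu_par_def p_def using assms(2) by (simp add: abs_div)
  have \<mu>n: "\<mu> / real n = \<bar>p\<bar>" "- \<mu> / real n = - \<bar>p\<bar>" using \<mu> assms(1) by simp_all
  have "- p = (\<mu>2 - \<mu>1) / \<sigma>"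
    unfolding p_def by (metis minus_diff_eq minus_divide_left)
  then have cmp: "\<mu>1 \<le> \<mu>2 + \<sigma> * u \<longleftrightarrow> p \<le> u" "\<mu>2 \<le> \<mu>1 + \<sigma> * u \<longleftrightarrow> - p \<le> u"
    unfolding p_def using assms(2) by (simp_all add: pos_divide_le_eq algebra_simps)
  have exps: "exp (- real n * (\<mu>2 - \<mu>1) / \<sigma>) = exp (real n * p)"
    "exp (- real n * (\<mu>1 - \<mu>2) / \<sigma>) = exp (- (real n * p))"
    using assms(2) by (simp_all add: p_def field_simps)
  have dens: "cond_dens3 n \<mu> 1 u v w =
      (if w > 0 \<and> ((- \<bar>p\<bar> < u \<and> u < 0 \<and> - u / w < v) \<or> (0 < u \<and> u < \<bar>p\<bar> \<and> 0 < v)) then C * exp (- \<mu>)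
       else if w > 0 \<and> \<bar>p\<bar> < u \<and> 0 < v then C * (exp (- \<mu>) + exp \<mu>) else 0)"
  proof -
    have c: "real n ^ 2 / (Gamma (2 * (real n - 1)) * 1) * v ^ (2 * n - 2) * exp (- v * (1 + real n * w)) *
        exp (- 2 * real n * u) = C"
      unfolding C_def Gamma_eq_fact_2n_3[OF assms(1)] by simp
    show ?thesis unfolding cond_dens3_def Let_def c \<mu>n ..
  qed
  have p: "u \<noteq> \<bar>p\<bar>" "u \<noteq> - \<bar>p\<bar>" using generic(2,3) \<mu>n unfolding \<mu>_def by auto
  have exp_\<mu>: "exp (- \<mu>) = (if p \<ge> 0 then exp (- (real n * p)) else exp (real n * p))"
    "exp \<mu> = (if p \<ge> 0 then exp (real n * p) else exp (- (real n * p)))"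
    unfolding \<mu> by simp_all
  have cases: "(if p \<le> u \<and> 0 \<le> u + v * w \<and> 0 \<le> v then C * exp (real n * p) else 0) * (if w > 0 then 1 else 0)
       + (if - p \<le> u \<and> 0 \<le> u + v * w \<and> 0 \<le> v then C * exp (- (real n * p)) else 0) * (if w \<ge> 0 then 1 else 0)
     = cond_dens3 n \<mu> 1 u v w"
    unfolding dens by (rule two_branch_cases[OF generic(1) p generic(4-6) exp_\<mu>])
  show ?thesis
    unfolding branch_density_eq[OF assms(1,2)] cmp exps \<mu>_def[symmetric] C_def[symmetric]
    using cases by (simp add: mult.assoc)
qed

text \<open>With \<open>f1w = 1\<close>, \<^const>\<open>cond_dens3\<close> is the joint density of \<open>(U', V, W)\<close>.\<close>

lemma AE_branch_densities_eq_cond_dens3: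
  assumes "n \<ge> 2" "\<sigma> > 0"
  shows "AE u in lborel. AE v in lborel. AE w in lborel.
           ennreal (branch_density n \<sigma> \<mu>1 \<mu>2 u v w) * indicator {0<..} w
         + ennreal (branch_density n \<sigma> \<mu>2 \<mu>1 u v w) * indicator {0..} w
         = ennreal (cond_dens3 n (mu_par n \<mu>1 \<mu>2 \<sigma>) 1 u v w)"
proof -
  let ?\<mu> = "mu_par n \<mu>1 \<mu>2 \<sigma>"
  have AE_u: "AE u in lborel. u \<noteq> 0 \<and> u \<noteq> ?\<mu> / real n \<and> u \<noteq> - ?\<mu> / real n"
    using AE_lborel_singleton[of 0] AE_lborel_singleton[of "?\<mu> / real n"] AE_lborel_singleton[of "- ?\<mu> / real n"]
    by eventually_elim simp
  have AE_w: "AE w in lborel. w \<noteq> 0 \<and> u + v * w \<noteq> 0" if "v \<noteq> 0" for u v :: real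
    using AE_lborel_singleton[of 0] AE_lborel_singleton[of "- u / v"]
    by eventually_elim (use that in \<open>auto simp: field_simps\<close>)
  show ?thesis
    using AE_u
  proof eventually_elim
    case (elim u)
    show ?case
      using AE_lborel_singleton[of 0]
    proof eventually_elim
      case (elim v)
      show ?case
        using AE_w[of v u, OF elim]
      proof eventually_elim
        case (elim w)
        then have sum: "branch_density n \<sigma> \<mu>1 \<mu>2 u v w * (if w > 0 then 1 else 0)
            + branch_density n \<sigma> \<mu>2 \<mu>1 u v w * (if w \<ge> 0 then 1 else 0) = cond_dens3 n ?\<mu> 1 u v w"
          using branch_densities_eq_cond_dens3[OF assms] \<open>u \<noteq> 0 \<and> _\<close> \<open>v \<noteq> 0\<close> by simp
        show ?case
        proof (cases "w > 0")
          case True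
          then show ?thesis
            by (simp add: sum[symmetric] ennreal_plus branch_density_nonneg[OF assms])
        next
          case False
          then show ?thesis
            using sum elim by simp
        qed
      qed
    qed
  qed
qed

lemma nn_integral_uvw_map:
  assumes "n \<ge> 2" "\<sigma> > 0" and [measurable]: "g \<in> borel_measurable (borel \<Otimes>\<^sub>M borel \<Otimes>\<^sub>M borel)"
  shows "(\<integral>\<^sup>+m1. \<integral>\<^sup>+m2. \<integral>\<^sup>+t. ennreal (shexp_density \<mu>1 (\<sigma> / real n) m1 * shexp_density \<mu>2 (\<sigma> / real n) m2 *
            erlang_density (2 * n - 3) (1 / \<sigma>) t) * g (uvw_map \<mu>1 \<mu>2 \<sigma> m1 m2 t) \<partial>lborel \<partial>lborel \<partial>lborel)
       = (\<integral>\<^sup>+u. \<integral>\<^sup>+v. \<integral>\<^sup>+w. ennreal (cond_dens3 n (mu_par n \<mu>1 \<mu>2 \<sigma>) 1 u v w) * g (u, v, w) \<partial>lborel \<partial>lborel \<partial>lborel)"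
proof -
  have [measurable]: "(\<lambda>p. branch_density n \<sigma> a b (fst p) (fst (snd p)) (snd (snd p)))
       \<in> borel_measurable (borel \<Otimes>\<^sub>M borel \<Otimes>\<^sub>M borel)" for a b
    unfolding branch_density_def by measurable
  show ?thesis
    unfolding nn_integral_uvw_map_branches[OF assms]
    using AE_branch_densities_eq_cond_dens3[OF assms(1,2), of \<mu>1 \<mu>2]
    by (subst nn_integral_lborel3_add[symmetric]) (measurable,
      auto intro!: nn_integral_lborel3_cong_AE elim!: eventually_mono simp: distrib_right[symmetric])
qed

lemma (in prob_space) nn_integral_Uprime_Vstat_Wstat:
  fixes X :: "nat \<Rightarrow> nat \<Rightarrow> 'a \<Rightarrow> real"
  assumes indep: "indep_vars (\<lambda>_. borel) (\<lambda>(i, j). X i j) ({1,2} \<times> {1..n})"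
    and law1: "\<And>j. j \<in> {1..n} \<Longrightarrow> distributed M lborel (X 1 j) (\<lambda>x. ennreal (shexp_density \<mu>1 \<sigma> x))"
    and law2: "\<And>j. j \<in> {1..n} \<Longrightarrow> distributed M lborel (X 2 j) (\<lambda>x. ennreal (shexp_density \<mu>2 \<sigma> x))"
    and "n \<ge> 2" "\<sigma> > 0" and [measurable]: "g \<in> borel_measurable (borel \<Otimes>\<^sub>M borel \<Otimes>\<^sub>M borel)"
  shows "(\<integral>\<^sup>+\<omega>. g (Uprime X n \<mu>1 \<mu>2 \<sigma> \<omega>, Vstat X n \<sigma> \<omega>, Wstat X n \<omega>) \<partial>M)
       = (\<integral>\<^sup>+u. \<integral>\<^sup>+v. \<integral>\<^sup>+w. ennreal (cond_dens3 n (mu_par n \<mu>1 \<mu>2 \<sigma>) 1 u v w) * g (u, v, w) \<partial>lborel \<partial>lborel \<partial>lborel)"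
  unfolding Uprime_Vstat_Wstat_eq_uvw_map
  using nn_integral_two_sample_min_min_spread[OF indep law1 law2 assms(4,5), of "\<lambda>(m1, m2, t). g (uvw_map \<mu>1 \<mu>2 \<sigma> m1 m2 t)"]
    nn_integral_uvw_map[OF assms(4,5,6)]
  by simp

lemma (in prob_space) distributed_Uprime_Vstat_Wstat:
  fixes X :: "nat \<Rightarrow> nat \<Rightarrow> 'a \<Rightarrow> real"
  assumes "n \<ge> 2" "\<sigma> > 0"
    and indep: "indep_vars (\<lambda>_. borel) (\<lambda>(i, j). X i j) ({1,2} \<times> {1..n})"
    and law1: "\<And>j. j \<in> {1..n} \<Longrightarrow> distributed M lborel (X 1 j) (\<lambda>x. ennreal (shexp_density \<mu>1 \<sigma> x))"
    and law2: "\<And>j. j \<in> {1..n} \<Longrightarrow> distributed M lborel (X 2 j) (\<lambda>x. ennreal (shexp_density \<mu>2 \<sigma> x))"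
  shows "distributed M (lborel \<Otimes>\<^sub>M lborel \<Otimes>\<^sub>M lborel) (\<lambda>\<omega>. (Uprime X n \<mu>1 \<mu>2 \<sigma> \<omega>, Vstat X n \<sigma> \<omega>, Wstat X n \<omega>))
           (\<lambda>(u, v, w). ennreal (cond_dens3 n (mu_par n \<mu>1 \<mu>2 \<sigma>) 1 u v w))"
proof -
  let ?N = "lborel \<Otimes>\<^sub>M lborel \<Otimes>\<^sub>M lborel :: (real \<times> real \<times> real) measure"
  let ?Y = "\<lambda>\<omega>. (Uprime X n \<mu>1 \<mu>2 \<sigma> \<omega>, Vstat X n \<sigma> \<omega>, Wstat X n \<omega>)"
  let ?joint = "\<lambda>(u, v, w). ennreal (cond_dens3 n (mu_par n \<mu>1 \<mu>2 \<sigma>) 1 u v w)"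
  have sets_N: "sets ?N = sets (borel \<Otimes>\<^sub>M borel \<Otimes>\<^sub>M borel)"
    by (intro sets_pair_measure_cong) auto
  note measurable_N = measurable_cong_sets[OF sets_N refl] measurable_cong_sets[OF refl sets_N]
  have joint_measurable: "?joint \<in> borel_measurable ?N"
    unfolding measurable_N cond_dens3_def Let_def by measurable
  have "?Y \<in> measurable M ?N"
    unfolding measurable_N using distributed_measurable[OF law1] distributed_measurable[OF law2]
    by (intro measurable_Uprime_Vstat_Wstat) auto
  then show ?thesis
  proof (rule distributedI_nn_integral[OF _ joint_measurable])
    fix A :: "(real \<times> real \<times> real) set"
    assume "A \<in> sets ?N"
    then have [measurable]: "A \<in> sets (borel \<Otimes>\<^sub>M borel \<Otimes>\<^sub>M borel)" by (simp add: sets_N)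
    have [measurable]: "(\<lambda>z. ?joint z * indicator A z) \<in> borel_measurable (borel \<Otimes>\<^sub>M borel \<Otimes>\<^sub>M borel)"
      using joint_measurable unfolding measurable_N by measurable
    have "(\<integral>\<^sup>+\<omega>. indicator A (?Y \<omega>) \<partial>M)
        = (\<integral>\<^sup>+u. \<integral>\<^sup>+v. \<integral>\<^sup>+w. ?joint (u, v, w) * indicator A (u, v, w) \<partial>lborel \<partial>lborel \<partial>lborel)"
      unfolding case_prod_conv by (rule nn_integral_Uprime_Vstat_Wstat[OF indep law1 law2 assms(1,2)]) measurable
    also have "\<dots> = (\<integral>\<^sup>+z. ?joint z * indicator A z \<partial>?N)"
      by (rule nn_integral_lborel3) measurable
    finally show "(\<integral>\<^sup>+\<omega>. indicator A (?Y \<omega>) \<partial>M) = (\<integral>\<^sup>+z. ?joint z * indicator A z \<partial>?N)" .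
  qed
qed

lemma cond_dens3_mult:
  assumes "f \<noteq> 0"
  shows "cond_dens3 n \<mu> f u v w * f = cond_dens3 n \<mu> 1 u v w"
proof -
  define R where "R = v ^ (2 * n - 2) * exp (- v * (1 + real n * w)) * exp (- 2 * real n * u) *
    (if w > 0 \<and> ((- \<mu> / real n < u \<and> u < 0 \<and> - u / w < v) \<or> (0 < u \<and> u < \<mu> / real n \<and> 0 < v))
     then exp (- \<mu>) else if w > 0 \<and> \<mu> / real n < u \<and> 0 < v then exp (- \<mu>) + exp \<mu> else 0)"
  have "cond_dens3 n \<mu> f u v w = real n ^ 2 / (Gamma (2 * (real n - 1)) * f) * R" for f
    unfolding cond_dens3_def Let_def R_def by (auto simp: mult.assoc)
  then show ?thesis
    using assms by (cases "Gamma (2 * (real n - 1)) = 0") simp_all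
qed

theorem lemma4p2:
  fixes M :: "'a measure" and X :: "nat \<Rightarrow> nat \<Rightarrow> 'a \<Rightarrow> real"
    and n :: nat and \<mu>1 \<mu>2 \<sigma> :: real and f1 :: "real \<Rightarrow> real"
  assumes "prob_space M"
    and "n \<ge> 2"
    and "\<sigma> > 0"
    and "prob_space.indep_vars M (\<lambda>_. borel) (\<lambda>(i, j). X i j) ({1,2} \<times> {1..n})"
    and "\<And>j. j \<in> {1..n} \<Longrightarrow> distributed M lborel (X 1 j) (\<lambda>x. ennreal (shexp_density \<mu>1 \<sigma> x))"
    and "\<And>j. j \<in> {1..n} \<Longrightarrow> distributed M lborel (X 2 j) (\<lambda>x. ennreal (shexp_density \<mu>2 \<sigma> x))"
    and "\<And>w. f1 w \<ge> 0"
    and "distributed M lborel (Wstat X n) (\<lambda>w. ennreal (f1 w))"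
  shows "distributed M (lborel \<Otimes>\<^sub>M lborel \<Otimes>\<^sub>M lborel)
           (\<lambda>\<omega>. (Uprime X n \<mu>1 \<mu>2 \<sigma> \<omega>, Vstat X n \<sigma> \<omega>, Wstat X n \<omega>))
           (\<lambda>(u, v, w). ennreal (cond_dens3 n (mu_par n \<mu>1 \<mu>2 \<sigma>) (f1 w) u v w * f1 w))"
proof -
  interpret prob_space M by (rule assms(1))
  have [measurable]: "f1 \<in> borel_measurable borel"
  proof -
    have "(\<lambda>x. enn2real (ennreal (f1 x))) \<in> borel_measurable borel"
      using distributed_borel_measurable[OF assms(8)] by measurable
    then show ?thesis using assms(7) by simp
  qed
  show ?thesis
  proof (rule distributed_density_cong_marginal[where \<pi> = "\<lambda>z. snd (snd z)" and K = lborel])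
    show "distributed M (lborel \<Otimes>\<^sub>M lborel \<Otimes>\<^sub>M lborel) (\<lambda>\<omega>. (Uprime X n \<mu>1 \<mu>2 \<sigma> \<omega>, Vstat X n \<sigma> \<omega>, Wstat X n \<omega>))
        (\<lambda>(u, v, w). ennreal (cond_dens3 n (mu_par n \<mu>1 \<mu>2 \<sigma>) 1 u v w))"
      using assms(2-6) by (rule distributed_Uprime_Vstat_Wstat)
    show "distributed M lborel (\<lambda>\<omega>. snd (snd (Uprime X n \<mu>1 \<mu>2 \<sigma> \<omega>, Vstat X n \<sigma> \<omega>, Wstat X n \<omega>)))
        (\<lambda>w. ennreal (f1 w))"
      using assms(8) by simp
    show "(\<lambda>(u, v, w). ennreal (cond_dens3 n (mu_par n \<mu>1 \<mu>2 \<sigma>) (f1 w) u v w * f1 w))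
        \<in> borel_measurable (lborel \<Otimes>\<^sub>M lborel \<Otimes>\<^sub>M lborel)"
      unfolding cond_dens3_def Let_def by measurable
  qed (auto simp: cond_dens3_mult ennreal_eq_zero_iff[OF assms(7)])
qed

end
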